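(* For any $\mathbb{K}$-linear map $Z_R:\mathfrak{h}^0\rightarrow R$, $Z_R$ satisfies the double shuffle relations if and only if $$Z_R^t(w_1\overset{t}{\mathbin{\sqcup\!\sqcup}} w_2)=Z_R^t(w_1)Z_R^t(w_2)=Z_R^t(w_1\overset{t}{\ast} w_2), \quad (\forall w_1,w_2\in\mathfrak{h}^0_t).$$
   Context: Let $\mathbb{K}$ be a field of characteristic zero and $R$ a commutative $\mathbb{K}$-algebra with unit. Let $A=\{x,y\}$ be an alphabet of two noncommutative letters, $A^{\ast}$ the set of words (with empty word $1$), $\mathfrak{h}_t=\mathbb{K}[t]\langle A\rangle$, $\mathfrak{h}_t^1=\mathbb{K}[t]+\mathfrak{h}_ty$, $\mathfrak{h}_t^0=\mathbb{K}[t]+x\mathfrak{h}_ty$, and $\mathfrak{h},\mathfrak{h}^1,\mathfrak{h}^0$ the corresponding objects at $t=0$ (so $\mathfrak{h}_t^0=\mathfrak{h}^0[t]$). Put $z_k=x^{k-1}y$. The $t$-shuffle product $\overset{t}{\mathbin{\sqcup\!\sqcup}}$ on $\mathfrak{h}_t$ is $\mathbb{K}[t]$-bilinear with $1\overset{t}{\mathbin{\sqcup\!\sqcup}} w=w\overset{t}{\mathbin{\sqcup\!\sqcup}} 1=w$ and $aw_1\overset{t}{\mathbin{\sqcup\!\sqcup}} bw_2=a(w_1\overset{t}{\mathbin{\sqcup\!\sqcup}} bw_2)+b(aw_1\overset{t}{\mathbin{\sqcup\!\sqcup}} w_2)-\delta(w_1)\rho(a)bw_2-\delta(w_2)\rho(b)aw_1$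 for words $w,w_1,w_2$ and letters $a,b$, where $\delta(w)=1$ if $w=1$ and $0$ otherwise, $\rho(x)=0$, $\rho(y)=tx$. The $t$-harmonic shuffle product $\overset{t}{\ast}$ on $\mathfrak{h}_t^1$ is $\mathbb{K}[t]$-bilinear with $1\overset{t}{\ast} w=w\overset{t}{\ast}1=w$ and $z_kw_1\overset{t}{\ast} z_lw_2=z_k(w_1\overset{t}{\ast} z_lw_2)+z_l(z_kw_1\overset{t}{\ast} w_2)+(1-2t)z_{k+l}(w_1\overset{t}{\ast} w_2)+[1-\delta(w_1)\delta(w_2)](t^2-t)x^{k+l}(w_1\overset{t}{\ast} w_2)$. At $t=0$ these are the usual shuffle product $\mathbin{\sqcup\!\sqcup}$ and harmonic shuffle product $\ast$. Let $\sigma_t$ be the algebra automorphism of $\mathfrak{h}_t$ with $\sigma_t(x)=x$, $\sigma_t(y)=tx+y$, and $S_t$ the $\mathbb{K}[t]$-linear map with $S_t(1)=1$, $S_t(wa)=\sigma_t(w)a$ for $w\in A^\ast$, $a\in A$. For a $\mathbb{K}$-linear map $Z_R:\mathfrak{h}^0\to R$, extended $\mathbb{K}[t]$-linearly to $\mathfrak{h}^0_t\to R[t]$, define $Z_R^t=Z_R\circ S_t$. $Z_R$ is said to satisfy the double shuffle relations if $Z_R(w_1\mathbin{\sqcup\!\sqcup} w_2)=Z_R(w_1)Z_R(w_2)=Z_R(w_1\ast w_2)$ for all $w_1,w_2\in\mathfrak{h}^0$. *)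

theory Defs
  imports "HOL-Computational_Algebra.Polynomial" "HOL-Library.Poly_Mapping"
begin

text \<open>Letters x, y; words are lists of letters; noncommutative polynomials over a
coefficient ring 'a are finitely supported maps  word =>0 'a.
h = (word =>0 'k),  h_t = (word =>0 'k poly)  (K[t]-coefficients).\<close>

datatype letter = X | Y

type_synonym word = "letter list"

definition smulW :: "'a::semiring_0 \<Rightarrow> (word \<Rightarrow>\<^sub>0 'a) \<Rightarrow> (word \<Rightarrow>\<^sub>0 'a)" where
  "smulW c p = Poly_Mapping.map (\<lambda>a. c * a) p"

definition preW :: "word \<Rightarrow> (word \<Rightarrow>\<^sub>0 'a::comm_monoid_add) \<Rightarrow> (word \<Rightarrow>\<^sub>0 'a)" where
  "preW u p = (\<Sum>w\<in>Poly_Mapping.keys p. Poly_Mapping.single (u @ w) (Poly_Mapping.lookup p w))"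

definition sufW :: "word \<Rightarrow> (word \<Rightarrow>\<^sub>0 'a::comm_monoid_add) \<Rightarrow> (word \<Rightarrow>\<^sub>0 'a)" where
  "sufW u p = (\<Sum>w\<in>Poly_Mapping.keys p. Poly_Mapping.single (w @ u) (Poly_Mapping.lookup p w))"

definition wd :: "word \<Rightarrow> (word \<Rightarrow>\<^sub>0 'a::{zero,one})" where
  "wd w = Poly_Mapping.single w 1"

definition bilin :: "(word \<Rightarrow> word \<Rightarrow> (word \<Rightarrow>\<^sub>0 'a::comm_semiring_0)) \<Rightarrow>
    (word \<Rightarrow>\<^sub>0 'a) \<Rightarrow> (word \<Rightarrow>\<^sub>0 'a) \<Rightarrow> (word \<Rightarrow>\<^sub>0 'a)" where
  "bilin B p q = (\<Sum>u\<in>Poly_Mapping.keys p. \<Sum>v\<in>Poly_Mapping.keys q. smulW (Poly_Mapping.lookup p u * Poly_Mapping.lookup q v) (B u v))"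

definition lin :: "(word \<Rightarrow> (word \<Rightarrow>\<^sub>0 'a::semiring_0)) \<Rightarrow> (word \<Rightarrow>\<^sub>0 'a) \<Rightarrow> (word \<Rightarrow>\<^sub>0 'a)" where
  "lin B p = (\<Sum>u\<in>Poly_Mapping.keys p. smulW (Poly_Mapping.lookup p u) (B u))"

text \<open>Shuffle product with parameter tau on words:
  rho(x) = 0, rho(y) = tau x.  tau = [:0,1:] (i.e. t) over 'k poly gives the t-shuffle;
  tau = 0 over 'k gives the usual shuffle product.\<close>
definition rhoW :: "'a::comm_ring_1 \<Rightarrow> letter \<Rightarrow> word \<Rightarrow> (word \<Rightarrow>\<^sub>0 'a)" where
  "rhoW tau a w = (case a of X \<Rightarrow> 0 | Y \<Rightarrow> Poly_Mapping.single (X # w) tau)"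

fun shW :: "'a::comm_ring_1 \<Rightarrow> word \<Rightarrow> word \<Rightarrow> (word \<Rightarrow>\<^sub>0 'a)" where
  "shW tau [] w = wd w"
| "shW tau (a # w1) [] = wd (a # w1)"
| "shW tau (a # w1) (b # w2) =
     preW [a] (shW tau w1 (b # w2)) + preW [b] (shW tau (a # w1) w2)
     - (if w1 = [] then rhoW tau a (b # w2) else 0)
     - (if w2 = [] then rhoW tau b (a # w1) else 0)"

definition shuffle :: "(word \<Rightarrow>\<^sub>0 'a::comm_ring_1) \<Rightarrow> (word \<Rightarrow>\<^sub>0 'a) \<Rightarrow> (word \<Rightarrow>\<^sub>0 'a)" where
  "shuffle = bilin (shW 0)"

definition tshuffle :: "(word \<Rightarrow>\<^sub>0 'k::comm_ring_1 poly) \<Rightarrow> (word \<Rightarrow>\<^sub>0 'k poly) \<Rightarrow> (word \<Rightarrow>\<^sub>0 'k poly)" where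
  "tshuffle = bilin (shW [:0, 1:])"

text \<open>z_k = x^(k-1) y; a word in h^1 is a product z_{k1} ... z_{kn}; we encode it by [k1,...,kn].\<close>
definition zw :: "nat \<Rightarrow> word" where
  "zw k = replicate (k - 1) X @ [Y]"

definition zsw :: "nat list \<Rightarrow> word" where
  "zsw ks = concat (map zw ks)"

fun zsaux :: "nat \<Rightarrow> word \<Rightarrow> nat list" where
  "zsaux k [] = []"
| "zsaux k (X # w) = zsaux (Suc k) w"
| "zsaux k (Y # w) = Suc k # zsaux 0 w"

definition zs :: "word \<Rightarrow> nat list" where
  "zs w = zsaux 0 w"

fun hsZ :: "'a::comm_ring_1 \<Rightarrow> nat list \<Rightarrow> nat list \<Rightarrow> (word \<Rightarrow>\<^sub>0 'a)" where
  "hsZ tau [] v = wd (zsw v)"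
| "hsZ tau (k # u) [] = wd (zsw (k # u))"
| "hsZ tau (k # u) (l # v) =
     preW (zw k) (hsZ tau u (l # v)) + preW (zw l) (hsZ tau (k # u) v)
     + smulW (1 - 2 * tau) (preW (zw (k + l)) (hsZ tau u v))
     + (if u = [] \<and> v = [] then 0
        else smulW (tau ^ 2 - tau) (preW (replicate (k + l) X) (hsZ tau u v)))"

definition hsW :: "'a::comm_ring_1 \<Rightarrow> word \<Rightarrow> word \<Rightarrow> (word \<Rightarrow>\<^sub>0 'a)" where
  "hsW tau u v = hsZ tau (zs u) (zs v)"

definition harmonic :: "(word \<Rightarrow>\<^sub>0 'a::comm_ring_1) \<Rightarrow> (word \<Rightarrow>\<^sub>0 'a) \<Rightarrow> (word \<Rightarrow>\<^sub>0 'a)" where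
  "harmonic = bilin (hsW 0)"

definition tharmonic :: "(word \<Rightarrow>\<^sub>0 'k::comm_ring_1 poly) \<Rightarrow> (word \<Rightarrow>\<^sub>0 'k poly) \<Rightarrow> (word \<Rightarrow>\<^sub>0 'k poly)" where
  "tharmonic = bilin (hsW [:0, 1:])"

definition in_h0 :: "(word \<Rightarrow>\<^sub>0 'a::zero) \<Rightarrow> bool" where
  "in_h0 p \<longleftrightarrow> (\<forall>w\<in>Poly_Mapping.keys p. w = [] \<or> (hd w = X \<and> last w = Y))"

fun sigW :: "word \<Rightarrow> (word \<Rightarrow>\<^sub>0 'k::comm_ring_1 poly)" where
  "sigW [] = wd []"
| "sigW (X # w) = preW [X] (sigW w)"
| "sigW (Y # w) = preW [Y] (sigW w) + smulW [:0, 1:] (preW [X] (sigW w))"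

definition StW :: "word \<Rightarrow> (word \<Rightarrow>\<^sub>0 'k::comm_ring_1 poly)" where
  "StW w = (if w = [] then wd [] else sufW [last w] (sigW (butlast w)))"

definition St :: "(word \<Rightarrow>\<^sub>0 'k::comm_ring_1 poly) \<Rightarrow> (word \<Rightarrow>\<^sub>0 'k poly)" where
  "St p = lin StW p"

text \<open>K-linear map Z on h^0 into a commutative K-algebra R with structure map phi\<close>
definition is_K_algebra_hom :: "('k::field \<Rightarrow> 'r::comm_ring_1) \<Rightarrow> bool" where
  "is_K_algebra_hom phi \<longleftrightarrow> phi 1 = 1 \<and> (\<forall>a b. phi (a + b) = phi a + phi b)
      \<and> (\<forall>a b. phi (a * b) = phi a * phi b)"

definition K_linear_on_h0 :: "('k::field \<Rightarrow> 'r::comm_ring_1) \<Rightarrow> ((word \<Rightarrow>\<^sub>0 'k) \<Rightarrow> 'r) \<Rightarrow> bool" where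
  "K_linear_on_h0 phi Z \<longleftrightarrow>
     (\<forall>p q. in_h0 p \<longrightarrow> in_h0 q \<longrightarrow> Z (p + q) = Z p + Z q)
   \<and> (\<forall>c p. in_h0 p \<longrightarrow> Z (smulW c p) = phi c * Z p)"

text \<open>the K[t]-linear extension h^0_t = h^0[t] -> R[t]: coefficient of t^n of the result
  is Z applied to the coefficient of t^n\<close>
definition coeffW :: "(word \<Rightarrow>\<^sub>0 'k::zero poly) \<Rightarrow> nat \<Rightarrow> (word \<Rightarrow>\<^sub>0 'k)" where
  "coeffW p n = Poly_Mapping.map (\<lambda>c. coeff c n) p"

definition Zext :: "((word \<Rightarrow>\<^sub>0 'k::field) \<Rightarrow> 'r::comm_ring_1) \<Rightarrow> (word \<Rightarrow>\<^sub>0 'k poly) \<Rightarrow> 'r poly" where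
  "Zext Z p = (\<Sum>n\<le>(\<Sum>w\<in>Poly_Mapping.keys p. Polynomial.degree (Poly_Mapping.lookup p w)). monom (Z (coeffW p n)) n)"

definition Zt :: "((word \<Rightarrow>\<^sub>0 'k::field) \<Rightarrow> 'r::comm_ring_1) \<Rightarrow> (word \<Rightarrow>\<^sub>0 'k poly) \<Rightarrow> 'r poly" where
  "Zt Z p = Zext Z (St p)"

definition double_shuffle :: "((word \<Rightarrow>\<^sub>0 'k::field) \<Rightarrow> 'r::comm_ring_1) \<Rightarrow> bool" where
  "double_shuffle Z \<longleftrightarrow> (\<forall>w1 w2. in_h0 w1 \<longrightarrow> in_h0 w2 \<longrightarrow>
      Z (shuffle w1 w2) = Z w1 * Z w2 \<and> Z w1 * Z w2 = Z (harmonic w1 w2))"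

end

theory Submission
  imports Defs
begin

text \<open>\<open>S\<^sub>t\<close> transports both \<open>t\<close>-products to the classical ones,
  \<open>S\<^sub>t(w\<^sub>1 \<sqcup>\<^sub>t w\<^sub>2) = S\<^sub>t(w\<^sub>1) \<sqcup> S\<^sub>t(w\<^sub>2)\<close> and
  \<open>S\<^sub>t(w\<^sub>1 \<ast>\<^sub>t w\<^sub>2) = S\<^sub>t(w\<^sub>1) \<ast> S\<^sub>t(w\<^sub>2)\<close>, by induction along the defining recursions:
  \<open>S\<^sub>t\<close> replaces every letter \<open>y\<close> except the last one by \<open>y + t x\<close>, and the correction
  terms of the \<open>t\<close>-products are exactly what this substitution produces.
  The classical products have structure constants free of \<open>t\<close>, so the coefficient of \<open>t\<^sup>n\<close>
  in a product is the Cauchy product of the coefficients. Hence if \<open>Z\<close> is multiplicative on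
  h^0 for both products, so is its \<open>K[t]\<close>-linear extension, and \<open>Z\<^sup>t = Z \<circ> S\<^sub>t\<close> is
  multiplicative for both \<open>t\<close>-products. Conversely, at \<open>t = 0\<close> the map \<open>S\<^sub>t\<close> is the identity and
  the \<open>t\<close>-products are the classical ones, so the constant terms of the \<open>t\<close>-relations for
  constant polynomials are the double shuffle relations.\<close>

section \<open>Word polynomials as modules\<close>

lemma lookup_smulW [simp]: "Poly_Mapping.lookup (smulW c p) w = c * Poly_Mapping.lookup p w"
  by (simp add: smulW_def Poly_Mapping.map.rep_eq when_def)

lemma lookup_wd: "Poly_Mapping.lookup (wd w) v = (if v = w then 1 else 0)"
  by (simp add: wd_def lookup_single)

lemma smulW_add: "smulW c (p + q) = smulW c p + smulW c q"
  by (rule poly_mapping_eqI) (simp add: lookup_add algebra_simps)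

lemma smulW_add_left: "smulW (a + b) p = smulW a p + smulW b p"
  by (rule poly_mapping_eqI) (simp add: lookup_add algebra_simps)

lemma smulW_diff: "smulW (c::'a::comm_ring_1) (p - q) = smulW c p - smulW c q"
  by (rule poly_mapping_eqI) (simp add: lookup_minus algebra_simps)

lemma smulW_smulW [simp]: "smulW a (smulW b p) = smulW (a * b) (p :: _ \<Rightarrow>\<^sub>0 'a::comm_semiring_1)"
  by (rule poly_mapping_eqI) (simp add: algebra_simps)

lemma smulW_1 [simp]: "smulW 1 p = (p :: _ \<Rightarrow>\<^sub>0 'a::comm_semiring_1)"
  by (rule poly_mapping_eqI) simp

lemma smulW_0 [simp]: "smulW 0 p = 0"
  by (rule poly_mapping_eqI) simp

lemma smulW_zero [simp]: "smulW c 0 = 0"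
  by (rule poly_mapping_eqI) simp

lemma smulW_sum: "smulW c (\<Sum>i\<in>I. f i) = (\<Sum>i\<in>I. smulW c (f i))"
  by (induction I rule: infinite_finite_induct) (simp_all add: smulW_add)

lemma smulW_wd: "smulW c (wd w) = Poly_Mapping.single w (c::'a::comm_semiring_1)"
  by (rule poly_mapping_eqI) (simp add: lookup_wd lookup_single when_def)

lemma keys_smulW: "Poly_Mapping.keys (smulW c p) \<subseteq> Poly_Mapping.keys p"
  by (auto simp: in_keys_iff)

lemma keys_wd: "Poly_Mapping.keys (wd w) \<subseteq> {w}"
  by (auto simp: in_keys_iff lookup_wd split: if_splits)

lemma in_keys_wdD: "w \<in> Poly_Mapping.keys (wd v) \<Longrightarrow> w = v"
  using keys_wd by blast

lemma keys_diff_subset: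
  "Poly_Mapping.keys ((p::_ \<Rightarrow>\<^sub>0 'a::ab_group_add) - q) \<subseteq> Poly_Mapping.keys p \<union> Poly_Mapping.keys q"
  by (auto simp: in_keys_iff lookup_minus)

lemma keys_sum_subset: "Poly_Mapping.keys (sum f I) \<subseteq> (\<Union>i\<in>I. Poly_Mapping.keys (f i))"
proof (induction I rule: infinite_finite_induct)
  case (insert i I)
  then show ?case using keys_add [of "f i" "sum f I"] by auto
qed auto

lemma lin_superset:
  assumes "finite S" "Poly_Mapping.keys p \<subseteq> S"
  shows "lin f p = (\<Sum>u\<in>S. smulW (Poly_Mapping.lookup p u) (f u))"
  unfolding lin_def using assms
  by (intro sum.mono_neutral_cong_left) (auto simp: in_keys_iff)

lemma lin_add: "lin f (p + q) = lin f p + lin f q"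
proof -
  let ?S = "Poly_Mapping.keys p \<union> Poly_Mapping.keys q"
  have "lin f (p + q) = (\<Sum>u\<in>?S. smulW (Poly_Mapping.lookup (p + q) u) (f u))"
    by (rule lin_superset) (auto simp: keys_add)
  also have "\<dots> = (\<Sum>u\<in>?S. smulW (Poly_Mapping.lookup p u) (f u))
      + (\<Sum>u\<in>?S. smulW (Poly_Mapping.lookup q u) (f u))"
    by (simp add: lookup_add smulW_add_left sum.distrib)
  also have "\<dots> = lin f p + lin f q"
    by (subst (1 2) lin_superset[where S = ?S]) auto
  finally show ?thesis .
qed

lemma lin_smulW: "lin f (smulW c p) = smulW c (lin f (p :: _ \<Rightarrow>\<^sub>0 'a::comm_semiring_1))"
proof -
  have "lin f (smulW c p) = (\<Sum>u\<in>Poly_Mapping.keys p. smulW (Poly_Mapping.lookup (smulW c p) u) (f u))"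
    by (rule lin_superset) (auto simp: keys_smulW)
  then show ?thesis by (simp add: lin_def smulW_sum)
qed

lemma lin_wd [simp]: "lin f (wd w) = (f w :: _ \<Rightarrow>\<^sub>0 'a::comm_semiring_1)"
  by (simp add: wd_def lin_def)

lemma lin_fun_add: "lin (\<lambda>u. f u + g u) p = lin f p + lin g p"
  by (simp add: lin_def smulW_add sum.distrib)

lemma lin_fun_smulW: "lin (\<lambda>u. smulW c (f u)) p = smulW c (lin f (p :: _ \<Rightarrow>\<^sub>0 'a::comm_semiring_1))"
  by (simp add: lin_def smulW_sum mult.commute)

lemma keys_lin: "Poly_Mapping.keys (lin f p) \<subseteq> (\<Union>u\<in>Poly_Mapping.keys p. Poly_Mapping.keys (f u))"
  unfolding lin_def using keys_sum_subset keys_smulW by fastforce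

lemma lin_wd_self: "lin wd p = (p :: _ \<Rightarrow>\<^sub>0 'a::comm_semiring_1)"
proof (rule poly_mapping_eqI)
  fix v
  have "Poly_Mapping.lookup (lin wd p) v
      = (\<Sum>u\<in>Poly_Mapping.keys p. Poly_Mapping.lookup p u * (if v = u then 1 else 0))"
    by (simp add: lin_def lookup_sum lookup_wd)
  also have "\<dots> = Poly_Mapping.lookup p v"
    by (simp add: in_keys_iff if_distrib cong: if_cong)
  finally show "Poly_Mapping.lookup (lin wd p) v = Poly_Mapping.lookup p v" .
qed

definition wlinear :: "((word \<Rightarrow>\<^sub>0 'a::comm_semiring_1) \<Rightarrow> (word \<Rightarrow>\<^sub>0 'a)) \<Rightarrow> bool" where
  "wlinear F \<longleftrightarrow> (\<forall>p q. F (p + q) = F p + F q) \<and> (\<forall>c p. F (smulW c p) = smulW c (F p))"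

lemma wlinear_lin: "wlinear (lin f)"
  by (simp add: wlinear_def lin_add lin_smulW)

lemma wlinear_add: "wlinear F \<Longrightarrow> F (p + q) = F p + F q"
  by (simp add: wlinear_def)

lemma wlinear_smulW: "wlinear F \<Longrightarrow> F (smulW c p) = smulW c (F p)"
  by (simp add: wlinear_def)

lemma wlinear_zero: "wlinear F \<Longrightarrow> F 0 = 0"
  using wlinear_smulW[of F 0 0] by simp

lemma wlinear_sum: "wlinear F \<Longrightarrow> F (sum g I) = (\<Sum>i\<in>I. F (g i))"
  by (induction I rule: infinite_finite_induct) (simp_all add: wlinear_zero wlinear_add)

lemma wlinear_diff: "wlinear F \<Longrightarrow> F (p - q) = F p - F (q :: _ \<Rightarrow>\<^sub>0 'a::comm_ring_1)"
  using wlinear_add[of F "p - q" q] by (simp add: eq_diff_eq)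

lemma wlinear_eqI:
  assumes "wlinear F" "wlinear G" "\<And>w. w \<in> Poly_Mapping.keys p \<Longrightarrow> F (wd w) = G (wd w)"
  shows "F p = G p"
proof -
  have expand: "H p = lin (\<lambda>w. H (wd w)) p" if "wlinear H" for H
  proof -
    have "H p = H (lin wd p)" by (simp add: lin_wd_self)
    then show ?thesis unfolding lin_def by (simp add: wlinear_sum[OF that] wlinear_smulW[OF that])
  qed
  moreover have "lin (\<lambda>w. F (wd w)) p = lin (\<lambda>w. G (wd w)) p"
    unfolding lin_def using assms(3) by simp
  ultimately show ?thesis using assms(1,2) by metis
qed

lemma wlinear_comp: "wlinear F \<Longrightarrow> wlinear G \<Longrightarrow> wlinear (\<lambda>p. F (G p))"
  by (simp add: wlinear_def)

lemma wlinear_id: "wlinear (\<lambda>p. p)"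
  by (simp add: wlinear_def)

lemma wlinear_plus: "wlinear F \<Longrightarrow> wlinear G \<Longrightarrow> wlinear (\<lambda>p. F p + G p)"
  by (simp add: wlinear_def smulW_add add_ac)

lemma wlinear_minus: "wlinear F \<Longrightarrow> wlinear G \<Longrightarrow> wlinear (\<lambda>p. F p - (G p :: _ \<Rightarrow>\<^sub>0 'a::comm_ring_1))"
  by (simp add: wlinear_def smulW_diff)

lemma wlinear_smulW_fun: "wlinear F \<Longrightarrow> wlinear (\<lambda>p. smulW c (F p :: _ \<Rightarrow>\<^sub>0 'a::comm_semiring_1))"
  by (simp add: wlinear_def smulW_add mult.commute)

lemma preW_lin: "preW u (p :: _ \<Rightarrow>\<^sub>0 'a::comm_semiring_1) = lin (\<lambda>w. wd (u @ w)) p"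
  by (simp add: preW_def lin_def smulW_wd)

lemma sufW_lin: "sufW u (p :: _ \<Rightarrow>\<^sub>0 'a::comm_semiring_1) = lin (\<lambda>w. wd (w @ u)) p"
  by (simp add: sufW_def lin_def smulW_wd)

lemma wlinear_preW: "wlinear (preW u :: _ \<Rightarrow> _ \<Rightarrow>\<^sub>0 'a::comm_semiring_1)"
  unfolding preW_lin[abs_def] by (rule wlinear_lin)

lemma wlinear_sufW: "wlinear (sufW u :: _ \<Rightarrow> _ \<Rightarrow>\<^sub>0 'a::comm_semiring_1)"
  unfolding sufW_lin[abs_def] by (rule wlinear_lin)

lemma preW_wd [simp]: "preW u (wd w) = (wd (u @ w) :: _ \<Rightarrow>\<^sub>0 'a::comm_semiring_1)"
  by (simp add: preW_lin)

lemma sufW_wd [simp]: "sufW u (wd w) = (wd (w @ u) :: _ \<Rightarrow>\<^sub>0 'a::comm_semiring_1)"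
  by (simp add: sufW_lin)

lemmas preW_add = wlinear_add[OF wlinear_preW]
lemmas preW_smulW = wlinear_smulW[OF wlinear_preW]
lemmas preW_diff = wlinear_diff[OF wlinear_preW]
lemmas sufW_add = wlinear_add[OF wlinear_sufW]
lemmas sufW_smulW = wlinear_smulW[OF wlinear_sufW]

lemma preW_preW: "preW u (preW v p) = preW (u @ v) (p :: _ \<Rightarrow>\<^sub>0 'a::comm_semiring_1)"
  by (rule wlinear_eqI[OF wlinear_comp[OF wlinear_preW wlinear_preW] wlinear_preW]) simp

lemma preW_Nil [simp]: "preW [] p = (p :: _ \<Rightarrow>\<^sub>0 'a::comm_semiring_1)"
  by (rule wlinear_eqI[OF wlinear_preW wlinear_id]) simp

lemma sufW_preW: "sufW u (preW v p) = preW v (sufW u (p :: _ \<Rightarrow>\<^sub>0 'a::comm_semiring_1))"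
  by (rule wlinear_eqI[OF wlinear_comp[OF wlinear_sufW wlinear_preW]
        wlinear_comp[OF wlinear_preW wlinear_sufW]]) simp

lemma keys_preW:
  "Poly_Mapping.keys (preW u (p :: _ \<Rightarrow>\<^sub>0 'a::comm_semiring_1)) \<subseteq> (\<lambda>w. u @ w) ` Poly_Mapping.keys p"
  unfolding preW_lin using keys_lin keys_wd by fastforce

lemma keys_sufW:
  "Poly_Mapping.keys (sufW u (p :: _ \<Rightarrow>\<^sub>0 'a::comm_semiring_1)) \<subseteq> (\<lambda>w. w @ u) ` Poly_Mapping.keys p"
  unfolding sufW_lin using keys_lin keys_wd by fastforce

lemma bilin_lin: "bilin B p q = lin (\<lambda>u. lin (B u) q) (p :: _ \<Rightarrow>\<^sub>0 'a::comm_semiring_1)"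
  by (simp add: bilin_def lin_def smulW_sum)

lemma wlinear_bilin1: "wlinear (\<lambda>p. bilin B p q :: _ \<Rightarrow>\<^sub>0 'a::comm_semiring_1)"
  unfolding bilin_lin by (rule wlinear_lin)

lemma wlinear_bilin2: "wlinear (bilin B p :: _ \<Rightarrow> _ \<Rightarrow>\<^sub>0 'a::comm_semiring_1)"
  unfolding bilin_lin wlinear_def by (simp add: lin_add lin_smulW lin_fun_add lin_fun_smulW)

lemma bilin_wd [simp]: "bilin B (wd u) (wd v) = (B u v :: _ \<Rightarrow>\<^sub>0 'a::comm_semiring_1)"
  by (simp add: bilin_lin)

lemma bilin_eqI:
  assumes "\<And>q. wlinear (\<lambda>p. F p q)" "\<And>p. wlinear (F p)"
    and "\<And>q. wlinear (\<lambda>p. G p q)" "\<And>p. wlinear (G p)"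
    and "\<And>u v. u \<in> Poly_Mapping.keys p \<Longrightarrow> v \<in> Poly_Mapping.keys q \<Longrightarrow> F (wd u) (wd v) = G (wd u) (wd v)"
  shows "F p q = G p q"
proof (rule wlinear_eqI[where F = "\<lambda>p. F p q" and G = "\<lambda>p. G p q"])
  fix u assume u: "u \<in> Poly_Mapping.keys p"
  show "F (wd u) q = G (wd u) q"
    by (rule wlinear_eqI[OF assms(2) assms(4)]) (use u assms(5) in auto)
qed (use assms in auto)

section \<open>The map S_t and the shuffle product\<close>

abbreviation tvar :: "'k::comm_ring_1 poly" where
  "tvar \<equiv> [:0, 1:]"

definition sigma_pre :: "letter \<Rightarrow> (word \<Rightarrow>\<^sub>0 'k::comm_ring_1 poly) \<Rightarrow> (word \<Rightarrow>\<^sub>0 'k poly)" where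
  "sigma_pre a P = preW [a] P + (if a = Y then smulW tvar (preW [X] P) else 0)"

lemma sigma_pre_X [simp]: "sigma_pre X P = preW [X] P"
  by (simp add: sigma_pre_def)

lemma sigma_pre_Y [simp]: "sigma_pre Y P = preW [Y] P + smulW tvar (preW [X] P)"
  by (simp add: sigma_pre_def)

lemma wlinear_sigma_pre: "wlinear (sigma_pre a)"
proof (cases a)
  case X
  then show ?thesis using wlinear_preW by (simp add: sigma_pre_def[abs_def])
next
  case Y
  then show ?thesis
    by (simp add: sigma_pre_def[abs_def] wlinear_plus wlinear_preW wlinear_smulW_fun)
qed

lemma sigW_Cons: "sigW (a # w) = sigma_pre a (sigW w)"
  by (cases a) simp_all

lemma sufW_sigma_pre: "sufW u (sigma_pre a P) = sigma_pre a (sufW u P)"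
  by (cases a) (simp_all add: sufW_add sufW_smulW sufW_preW)

lemma StW_Nil [simp]: "StW [] = wd []"
  by (simp add: StW_def)

lemma StW_single [simp]: "StW [a] = wd [a]"
  by (simp add: StW_def)

lemma StW_Cons: "w \<noteq> [] \<Longrightarrow> StW (a # w) = sigma_pre a (StW w)"
  by (simp add: StW_def sigW_Cons sufW_sigma_pre)

lemma wlinear_St: "wlinear St"
  unfolding St_def[abs_def] by (rule wlinear_lin)

lemma St_wd [simp]: "St (wd w) = StW w"
  by (simp add: St_def)

lemmas St_add = wlinear_add[OF wlinear_St]
lemmas St_smulW = wlinear_smulW[OF wlinear_St]
lemmas St_diff = wlinear_diff[OF wlinear_St]
lemmas St_zero = wlinear_zero[OF wlinear_St]

lemma St_preW_letter:
  assumes "[] \<notin> Poly_Mapping.keys R"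
  shows "St (preW [a] R) = sigma_pre a (St R)"
proof (rule wlinear_eqI[OF wlinear_comp[OF wlinear_St wlinear_preW]
      wlinear_comp[OF wlinear_sigma_pre wlinear_St]])
  fix w assume "w \<in> Poly_Mapping.keys R"
  then have "w \<noteq> []" using assms by auto
  then show "St (preW [a] (wd w)) = sigma_pre a (St (wd w))" by (simp add: StW_Cons)
qed

lemma rhoW_0 [simp]: "rhoW 0 a w = 0"
  by (cases a) (simp_all add: rhoW_def)

lemma shW_Nil2 [simp]: "shW tau u [] = wd u"
  by (cases u) simp_all

lemma wlinear_shuffle1: "wlinear (\<lambda>p. shuffle p q)"
  unfolding shuffle_def by (rule wlinear_bilin1)

lemma wlinear_shuffle2: "wlinear (shuffle p)"
  unfolding shuffle_def by (rule wlinear_bilin2)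

lemmas shuffle_add1 = wlinear_add[OF wlinear_shuffle1]
lemmas shuffle_add2 = wlinear_add[OF wlinear_shuffle2]
lemmas shuffle_smulW1 = wlinear_smulW[OF wlinear_shuffle1]
lemmas shuffle_smulW2 = wlinear_smulW[OF wlinear_shuffle2]

lemma shuffle_wd [simp]: "shuffle (wd u) (wd v) = shW 0 u v"
  by (simp add: shuffle_def)

lemma shuffle_Nil1: "shuffle (wd []) B = B"
  by (rule wlinear_eqI[OF wlinear_shuffle2 wlinear_id]) simp

lemma shuffle_Nil2: "shuffle A (wd []) = A"
  by (rule wlinear_eqI[OF wlinear_shuffle1 wlinear_id]) simp

lemma shuffle_preW_preW:
  "shuffle (preW [a] A) (preW [b] B) =
    preW [a] (shuffle A (preW [b] B)) + preW [b] (shuffle (preW [a] A) B)"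
  by (rule bilin_eqI[where F = "\<lambda>A B. shuffle (preW [a] A) (preW [b] B)"])
     (simp_all add: wlinear_comp[OF wlinear_shuffle1 wlinear_preW]
        wlinear_comp[OF wlinear_shuffle2 wlinear_preW] wlinear_plus
        wlinear_comp[OF wlinear_preW wlinear_shuffle1] wlinear_comp[OF wlinear_preW wlinear_shuffle2]
        wlinear_comp[OF wlinear_preW wlinear_comp[OF wlinear_shuffle2 wlinear_preW]]
        wlinear_comp[OF wlinear_preW wlinear_comp[OF wlinear_shuffle1 wlinear_preW]])

text \<open>Since \<open>\<sigma>\<^sub>t(y) = y + t x\<close> is a sum of letters, the shuffle recursion also holds with
  \<open>\<sigma>\<^sub>t\<close>-images of letters in front.\<close>

lemma shuffle_sigma_pre_preW:
  "shuffle (sigma_pre a A) (preW [b] B) =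
    sigma_pre a (shuffle A (preW [b] B)) + preW [b] (shuffle (sigma_pre a A) B)"
  by (cases a)
     (simp_all add: shuffle_add1 shuffle_smulW1 shuffle_preW_preW preW_add preW_smulW smulW_add add_ac)

lemma shuffle_preW_sigma_pre:
  "shuffle (preW [a] A) (sigma_pre b B) =
    preW [a] (shuffle A (sigma_pre b B)) + sigma_pre b (shuffle (preW [a] A) B)"
  by (cases b)
     (simp_all add: shuffle_add2 shuffle_smulW2 shuffle_preW_preW preW_add preW_smulW smulW_add add_ac)

lemma shuffle_sigma_pre_sigma_pre:
  "shuffle (sigma_pre a A) (sigma_pre b B) =
    sigma_pre a (shuffle A (sigma_pre b B)) + sigma_pre b (shuffle (sigma_pre a A) B)"
proof (cases b)
  case X
  then show ?thesis by (simp add: shuffle_sigma_pre_preW)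
next
  case Y
  then show ?thesis
    by (simp add: shuffle_add2 shuffle_smulW2 shuffle_sigma_pre_preW wlinear_add[OF wlinear_sigma_pre]
        wlinear_smulW[OF wlinear_sigma_pre] preW_add preW_smulW smulW_add add_ac)
qed

lemma Nil_notin_keys_shW: "u \<noteq> [] \<or> v \<noteq> [] \<Longrightarrow> [] \<notin> Poly_Mapping.keys (shW tau u v)"
proof (induction tau u v rule: shW.induct)
  case (3 tau a w1 b w2)
  let ?A = "preW [a] (shW tau w1 (b # w2))" and ?B = "preW [b] (shW tau (a # w1) w2)"
  let ?C = "if w1 = [] then rhoW tau a (b # w2) else 0" and ?D = "if w2 = [] then rhoW tau b (a # w1) else 0"
  have eq: "shW tau (a # w1) (b # w2) = ?A + ?B - ?C - ?D"
    by (simp only: shW.simps)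
  have "Poly_Mapping.keys (shW tau (a # w1) (b # w2)) \<subseteq>
      Poly_Mapping.keys ?A \<union> Poly_Mapping.keys ?B \<union> Poly_Mapping.keys ?C \<union> Poly_Mapping.keys ?D"
    unfolding eq
    using keys_add[of ?A ?B] keys_diff_subset[of "?A + ?B" ?C] keys_diff_subset[of "?A + ?B - ?C" ?D]
    by blast
  moreover have "Poly_Mapping.keys ?C \<subseteq> {X # b # w2}" "Poly_Mapping.keys ?D \<subseteq> {X # a # w1}"
    by (cases a; cases b; auto simp: rhoW_def)+
  ultimately show ?case using keys_preW[of "[a]"] keys_preW[of "[b]"] by blast
qed (use keys_wd in fastforce)+

lemma St_rhoW:
  "St (rhoW tvar a (b # w)) = sigma_pre a (StW (b # w)) - preW [a] (StW (b # w))"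
  by (cases a) (simp_all add: rhoW_def smulW_wd[symmetric] St_smulW StW_Cons St_zero)

text \<open>In \<open>S\<^sub>t(w a) = \<sigma>\<^sub>t(w) a\<close> the last letter is not transformed; the correction terms
  \<open>-\<rho>(a) b w\<^sub>2\<close> of the t-shuffle compensate exactly for this when one factor is a single letter.\<close>

lemma St_shW: "St (shW tvar u v) = shuffle (StW u) (StW v :: _ \<Rightarrow>\<^sub>0 'k::comm_ring_1 poly)"
proof (induction "tvar :: 'k poly" u v rule: shW.induct)
  case (3 a w1 b w2)
  have "St (shW tvar (a # w1) (b # w2)) =
      sigma_pre a (shuffle (StW w1) (StW (b # w2))) + sigma_pre b (shuffle (StW (a # w1)) (StW w2))
      - St (if w1 = [] then rhoW (tvar::'k poly) a (b # w2) else 0)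
      - St (if w2 = [] then rhoW (tvar::'k poly) b (a # w1) else 0)"
    using St_preW_letter[OF Nil_notin_keys_shW[of w1 "b # w2" "tvar :: 'k poly"]]
      St_preW_letter[OF Nil_notin_keys_shW[of "a # w1" w2 "tvar :: 'k poly"]]
    by (simp add: St_diff St_add 3)
  also have "\<dots> = shuffle (StW (a # w1)) (StW (b # w2))"
  proof (cases "w1 = []"; cases "w2 = []")
    assume "w1 = []" "w2 = []"
    then show ?thesis by (simp add: St_rhoW shuffle_Nil1 shuffle_Nil2)
  next
    assume w: "w1 = []" "w2 \<noteq> []"
    have "shuffle (wd [a]) (StW (b # w2) :: _ \<Rightarrow>\<^sub>0 'k poly) = preW [a] (StW (b # w2)) + sigma_pre b (shuffle (wd [a]) (StW w2))"
      using shuffle_preW_sigma_pre[of a "wd []" b "StW w2"] w by (simp add: StW_Cons shuffle_Nil1)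
    then show ?thesis using w by (simp add: St_rhoW St_zero shuffle_Nil1)
  next
    assume w: "w1 \<noteq> []" "w2 = []"
    have "shuffle (StW (a # w1) :: _ \<Rightarrow>\<^sub>0 'k poly) (wd [b]) = sigma_pre a (shuffle (StW w1) (wd [b])) + preW [b] (StW (a # w1))"
      using shuffle_sigma_pre_preW[of a "StW w1" b "wd []"] w by (simp add: StW_Cons shuffle_Nil2)
    then show ?thesis using w by (simp add: St_rhoW St_zero shuffle_Nil2)
  next
    assume "w1 \<noteq> []" "w2 \<noteq> []"
    then show ?thesis by (simp add: StW_Cons shuffle_sigma_pre_sigma_pre St_zero)
  qed
  finally show ?case .
qed (simp_all add: shuffle_Nil1 shuffle_Nil2)

lemma St_tshuffle: "St (tshuffle P Q) = shuffle (St P) (St (Q :: _ \<Rightarrow>\<^sub>0 'k::comm_ring_1 poly))"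
  unfolding tshuffle_def
  by (rule bilin_eqI[where F = "\<lambda>P Q. St (bilin (shW tvar) P Q)" and G = "\<lambda>P Q. shuffle (St P) (St Q)"])
     (simp_all add: wlinear_comp[OF wlinear_St wlinear_bilin1] wlinear_comp[OF wlinear_St wlinear_bilin2]
       wlinear_comp[OF wlinear_shuffle1 wlinear_St] wlinear_comp[OF wlinear_shuffle2 wlinear_St] St_shW)

section \<open>The harmonic product in the letters z_k\<close>

definition h1_word :: "word \<Rightarrow> bool" where
  "h1_word w \<longleftrightarrow> w = [] \<or> last w = Y"

definition h0_word :: "word \<Rightarrow> bool" where
  "h0_word w \<longleftrightarrow> w = [] \<or> (hd w = X \<and> last w = Y)"

definition in_h1 :: "(word \<Rightarrow>\<^sub>0 'a::zero) \<Rightarrow> bool" where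
  "in_h1 p \<longleftrightarrow> (\<forall>w\<in>Poly_Mapping.keys p. h1_word w)"

definition in_hy :: "(word \<Rightarrow>\<^sub>0 'a::zero) \<Rightarrow> bool" where
  "in_hy p \<longleftrightarrow> (\<forall>w\<in>Poly_Mapping.keys p. w \<noteq> [] \<and> last w = Y)"

lemma in_h0_iff: "in_h0 p \<longleftrightarrow> (\<forall>w\<in>Poly_Mapping.keys p. h0_word w)"
  by (simp add: in_h0_def h0_word_def)

lemma in_h1_if_in_h0: "in_h0 p \<Longrightarrow> in_h1 p"
  by (auto simp: in_h0_def in_h1_def h1_word_def)

lemma zsaux_replicate_X: "zsaux j (replicate n X @ w) = zsaux (j + n) w"
  by (induction n arbitrary: j) simp_all

lemma zs_zw_append: "k \<ge> 1 \<Longrightarrow> zs (zw k @ w) = k # zs w"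
  by (simp add: zs_def zw_def zsaux_replicate_X)

lemma zs_Nil [simp]: "zs [] = []"
  by (simp add: zs_def)

lemma zsw_Nil [simp]: "zsw [] = []"
  by (simp add: zsw_def)

lemma zsw_Cons [simp]: "zsw (k # ks) = zw k @ zsw ks"
  by (simp add: zsw_def)

lemma zw_not_Nil [simp]: "zw k \<noteq> []"
  by (simp add: zw_def)

lemma last_zw [simp]: "last (zw k) = Y"
  by (simp add: zw_def)

lemma h1_word_zsw: "h1_word (zsw ks)"
  by (induction ks) (auto simp: h1_word_def last_append)

lemma zsw_zsaux:
  "(w \<noteq> [] \<and> last w = Y) \<or> (w = [] \<and> j = 0) \<Longrightarrow> zsw (zsaux j w) = replicate j X @ w"
proof (induction w arbitrary: j)
  case (Cons a w)
  show ?case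
  proof (cases a)
    case X
    then have "w \<noteq> [] \<and> last w = Y" using Cons.prems by (auto split: if_splits)
    then show ?thesis using Cons.IH[of "Suc j"] X by (simp add: replicate_app_Cons_same)
  next
    case Y
    have "(w \<noteq> [] \<and> last w = Y) \<or> (w = [] \<and> (0::nat) = 0)" using Cons.prems by (auto split: if_splits)
    then show ?thesis using Cons.IH[of 0] Y by (simp add: zw_def)
  qed
qed simp

lemma zsw_zs: "h1_word w \<Longrightarrow> zsw (zs w) = w"
  unfolding zs_def h1_word_def using zsw_zsaux[of w 0] by auto

lemma zs_pos: "k \<in> set (zs w) \<Longrightarrow> k \<ge> 1"
proof -
  have "k \<in> set (zsaux j w) \<Longrightarrow> k \<ge> 1" for j
    by (induction j w rule: zsaux.induct) auto
  then show "k \<in> set (zs w) \<Longrightarrow> k \<ge> 1" by (simp add: zs_def)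
qed

lemma replicate_X_zw: "m \<ge> 1 \<Longrightarrow> replicate k X @ zw m = zw (k + m)"
  by (simp add: zw_def replicate_add[symmetric] add.commute)

lemma zw_append_if_ends_in_Y:
  assumes "w \<noteq> []" "last w = Y"
  obtains m w' where "m \<ge> 1" "w = zw m @ w'"
proof -
  have h1: "h1_word w" using assms by (simp add: h1_word_def)
  obtain m ms where zs: "zs w = m # ms"
    using assms zsw_zs[OF h1] by (cases "zs w") auto
  show ?thesis
  proof
    show "m \<ge> 1" using zs zs_pos[of m w] by simp
    show "w = zw m @ zsw ms" using zsw_zs[OF h1] zs by simp
  qed
qed

abbreviation zpre :: "nat \<Rightarrow> (word \<Rightarrow>\<^sub>0 'a::comm_ring_1) \<Rightarrow> (word \<Rightarrow>\<^sub>0 'a)" where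
  "zpre k \<equiv> preW (zw k)"

abbreviation xpre :: "nat \<Rightarrow> (word \<Rightarrow>\<^sub>0 'a::comm_ring_1) \<Rightarrow> (word \<Rightarrow>\<^sub>0 'a)" where
  "xpre k \<equiv> preW (replicate k X)"

lemma xpre_zpre: "m \<ge> 1 \<Longrightarrow> xpre k (zpre m A) = zpre (k + m) (A :: _ \<Rightarrow>\<^sub>0 'a::comm_ring_1)"
  by (simp add: preW_preW replicate_X_zw)

lemma hsZ_Nil2 [simp]: "hsZ tau u [] = wd (zsw u)"
  by (cases u) simp_all

lemma wlinear_harmonic1: "wlinear (\<lambda>p. harmonic p q)"
  unfolding harmonic_def by (rule wlinear_bilin1)

lemma wlinear_harmonic2: "wlinear (harmonic p)"
  unfolding harmonic_def by (rule wlinear_bilin2)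

lemmas harmonic_add1 = wlinear_add[OF wlinear_harmonic1]
lemmas harmonic_add2 = wlinear_add[OF wlinear_harmonic2]
lemmas harmonic_smulW1 = wlinear_smulW[OF wlinear_harmonic1]
lemmas harmonic_smulW2 = wlinear_smulW[OF wlinear_harmonic2]

lemma harmonic_wd [simp]: "harmonic (wd u) (wd v) = (hsW 0 u v :: _ \<Rightarrow>\<^sub>0 'a::comm_ring_1)"
  by (simp add: harmonic_def)

lemma harmonic_Nil1: "in_h1 B \<Longrightarrow> harmonic (wd []) B = (B :: _ \<Rightarrow>\<^sub>0 'a::comm_ring_1)"
  by (rule wlinear_eqI[OF wlinear_harmonic2 wlinear_id]) (simp add: in_h1_def hsW_def zsw_zs)

lemma harmonic_Nil2: "in_h1 A \<Longrightarrow> harmonic A (wd []) = (A :: _ \<Rightarrow>\<^sub>0 'a::comm_ring_1)"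
  by (rule wlinear_eqI[OF wlinear_harmonic1 wlinear_id]) (simp add: in_h1_def hsW_def zsw_zs)

lemma wlinear_preW_comp: "wlinear G \<Longrightarrow> wlinear (\<lambda>p. preW u (G p))"
  by (rule wlinear_comp[OF wlinear_preW])

lemma wlinear_harmonic1_comp: "wlinear G \<Longrightarrow> wlinear (\<lambda>p. harmonic (G p) q)"
  by (rule wlinear_comp[OF wlinear_harmonic1])

lemma wlinear_harmonic2_comp: "wlinear G \<Longrightarrow> wlinear (\<lambda>p. harmonic q (G p))"
  by (rule wlinear_comp[OF wlinear_harmonic2])

lemmas wlinear_intros =
  wlinear_plus wlinear_minus wlinear_preW_comp wlinear_harmonic1_comp wlinear_harmonic2_comp wlinear_id

lemma hsW_zw_zw:
  assumes "k \<ge> 1" "l \<ge> 1"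
  shows "hsW (0::'a::comm_ring_1) (zw k @ a) (zw l @ b) =
    zpre k (hsW 0 a (zw l @ b)) + zpre l (hsW 0 (zw k @ a) b) + zpre (k + l) (hsW 0 a b)"
  using assms by (simp add: hsW_def zs_zw_append)

lemma harmonic_zpre_zpre:
  assumes "k \<ge> 1" "l \<ge> 1"
  shows "harmonic (zpre k A) (zpre l B) =
    zpre k (harmonic A (zpre l B)) + zpre l (harmonic (zpre k A) B)
    + zpre (k + l) (harmonic A (B :: _ \<Rightarrow>\<^sub>0 'a::comm_ring_1))"
  by (rule bilin_eqI[where F = "\<lambda>A B. harmonic (zpre k A) (zpre l B)" and
        G = "\<lambda>A B. zpre k (harmonic A (zpre l B)) + zpre l (harmonic (zpre k A) B) + zpre (k + l) (harmonic A B)"])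
     (auto intro!: wlinear_intros simp: hsW_zw_zw[OF assms])

lemma wd_eq_zpre_if_in_hy:
  assumes "in_hy A" "w \<in> Poly_Mapping.keys A"
  obtains m w' where "m \<ge> 1" "wd w = zpre m (wd w' :: _ \<Rightarrow>\<^sub>0 'a::comm_ring_1)"
  using assms by (auto simp: in_hy_def elim!: zw_append_if_ends_in_Y)

text \<open>Writing \<open>x\<^sup>k z\<^sub>m = z\<^sub>k\<^sub>+\<^sub>m\<close>, the recursion of the harmonic product extends to prefixes
  \<open>x\<^sup>k\<close> in front of nonempty words ending in \<open>y\<close>, with a sign change in the diagonal term.\<close>

lemma harmonic_xpre_xpre:
  assumes "in_hy A" "in_hy B"
  shows "harmonic (xpre k A) (xpre l B) =
    xpre k (harmonic A (xpre l B)) + xpre l (harmonic (xpre k A) B)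
    - xpre (k + l) (harmonic A (B :: _ \<Rightarrow>\<^sub>0 'a::comm_ring_1))"
proof (rule bilin_eqI[where F = "\<lambda>A B. harmonic (xpre k A) (xpre l B)" and
      G = "\<lambda>A B. xpre k (harmonic A (xpre l B)) + xpre l (harmonic (xpre k A) B) - xpre (k + l) (harmonic A B)"])
  fix a b assume "a \<in> Poly_Mapping.keys A" "b \<in> Poly_Mapping.keys B"
  then obtain m a' n b' where m: "m \<ge> 1" "wd a = zpre m (wd a' :: _ \<Rightarrow>\<^sub>0 'a)"
    and n: "n \<ge> 1" "wd b = zpre n (wd b' :: _ \<Rightarrow>\<^sub>0 'a)"
    using wd_eq_zpre_if_in_hy assms by metis
  show "harmonic (xpre k (wd a)) (xpre l (wd b)) = xpre k (harmonic (wd a) (xpre l (wd b)))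
      + xpre l (harmonic (xpre k (wd a)) (wd b)) - xpre (k + l) (harmonic (wd a) (wd b :: _ \<Rightarrow>\<^sub>0 'a))"
    using m n
    by (simp del: preW_wd add: xpre_zpre harmonic_zpre_zpre preW_add preW_diff preW_preW replicate_X_zw add_ac)
qed (auto intro!: wlinear_intros)

lemma harmonic_xpre_zpre:
  assumes "in_hy A" "l \<ge> 1"
  shows "harmonic (xpre k A) (zpre l B) =
    xpre k (harmonic A (zpre l B)) + zpre l (harmonic (xpre k A) B)
    - zpre (k + l) (harmonic A (B :: _ \<Rightarrow>\<^sub>0 'a::comm_ring_1))"
proof (rule bilin_eqI[where F = "\<lambda>A B. harmonic (xpre k A) (zpre l B)" and
      G = "\<lambda>A B. xpre k (harmonic A (zpre l B)) + zpre l (harmonic (xpre k A) B) - zpre (k + l) (harmonic A B)"])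
  fix a b assume "a \<in> Poly_Mapping.keys A"
  then obtain m a' where m: "m \<ge> 1" "wd a = zpre m (wd a' :: _ \<Rightarrow>\<^sub>0 'a)"
    using wd_eq_zpre_if_in_hy assms(1) by metis
  show "harmonic (xpre k (wd a)) (zpre l (wd b)) = xpre k (harmonic (wd a) (zpre l (wd b)))
      + zpre l (harmonic (xpre k (wd a)) (wd b)) - zpre (k + l) (harmonic (wd a) (wd b :: _ \<Rightarrow>\<^sub>0 'a))"
    using m assms(2)
    by (simp del: preW_wd add: xpre_zpre harmonic_zpre_zpre preW_add preW_diff preW_preW replicate_X_zw add_ac)
qed (auto intro!: wlinear_intros)

lemma harmonic_zpre_xpre:
  assumes "in_hy B" "k \<ge> 1"
  shows "harmonic (zpre k A) (xpre l B) =
    zpre k (harmonic A (xpre l B)) + xpre l (harmonic (zpre k A) B)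
    - zpre (k + l) (harmonic A (B :: _ \<Rightarrow>\<^sub>0 'a::comm_ring_1))"
proof (rule bilin_eqI[where F = "\<lambda>A B. harmonic (zpre k A) (xpre l B)" and
      G = "\<lambda>A B. zpre k (harmonic A (xpre l B)) + xpre l (harmonic (zpre k A) B) - zpre (k + l) (harmonic A B)"])
  fix a b assume "b \<in> Poly_Mapping.keys B"
  then obtain n b' where n: "n \<ge> 1" "wd b = zpre n (wd b' :: _ \<Rightarrow>\<^sub>0 'a)"
    using wd_eq_zpre_if_in_hy assms(1) by metis
  show "harmonic (zpre k (wd a)) (xpre l (wd b)) = zpre k (harmonic (wd a) (xpre l (wd b)))
      + xpre l (harmonic (zpre k (wd a)) (wd b)) - zpre (k + l) (harmonic (wd a) (wd b :: _ \<Rightarrow>\<^sub>0 'a))"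
    using n assms(2)
    by (simp del: preW_wd add: xpre_zpre harmonic_zpre_zpre preW_add preW_diff preW_preW replicate_X_zw add_ac)
qed (auto intro!: wlinear_intros)

section \<open>S_t and the harmonic product\<close>

lemma keys_hsZ:
  "w \<in> Poly_Mapping.keys (hsZ tau ks ls) \<Longrightarrow> h1_word w \<and> (ks \<noteq> [] \<or> ls \<noteq> [] \<longrightarrow> w \<noteq> [])"
proof (induction tau ks ls arbitrary: w rule: hsZ.induct)
  case (1 tau v)
  then show ?case using keys_wd[of "zsw v"] h1_word_zsw[of v] by (cases v) auto
next
  case (2 tau k u)
  then show ?case using keys_wd[of "zsw (k # u)"] h1_word_zsw[of "k # u"] by auto
next
  case (3 tau k u l v)
  let ?A = "zpre k (hsZ tau u (l # v))" and ?B = "zpre l (hsZ tau (k # u) v)"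
  let ?C = "smulW (1 - 2 * tau) (zpre (k + l) (hsZ tau u v))"
  let ?D = "if u = [] \<and> v = [] then 0 else smulW (tau ^ 2 - tau) (xpre (k + l) (hsZ tau u v))"
  have "w \<in> Poly_Mapping.keys (?A + ?B + ?C + ?D)"
    using "3.prems" by (simp only: hsZ.simps)
  then have "w \<in> Poly_Mapping.keys ?A \<union> Poly_Mapping.keys ?B \<union> Poly_Mapping.keys ?C \<union> Poly_Mapping.keys ?D"
    using keys_add[of ?A ?B] keys_add[of "?A + ?B" ?C] keys_add[of "?A + ?B + ?C" ?D] by blast
  then show ?case
  proof (elim UnE)
    assume "w \<in> Poly_Mapping.keys ?A"
    then obtain w' where "w = zw k @ w'" "w' \<in> Poly_Mapping.keys (hsZ tau u (l # v))"
      using keys_preW by blast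
    then show ?thesis using "3.IH"(1)[of w'] by (auto simp: h1_word_def last_append)
  next
    assume "w \<in> Poly_Mapping.keys ?B"
    then obtain w' where "w = zw l @ w'" "w' \<in> Poly_Mapping.keys (hsZ tau (k # u) v)"
      using keys_preW by blast
    then show ?thesis using "3.IH"(2)[of w'] by (auto simp: h1_word_def last_append)
  next
    assume "w \<in> Poly_Mapping.keys ?C"
    then obtain w' where "w = zw (k + l) @ w'" "w' \<in> Poly_Mapping.keys (hsZ tau u v)"
      using keys_preW keys_smulW by blast
    then show ?thesis using "3.IH"(3)[of w'] by (auto simp: h1_word_def last_append)
  next
    assume w: "w \<in> Poly_Mapping.keys ?D"
    then have uv: "\<not> (u = [] \<and> v = [])" by auto
    with w obtain w' where "w = replicate (k + l) X @ w'" "w' \<in> Poly_Mapping.keys (hsZ tau u v)"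
      using keys_preW keys_smulW by (simp split: if_splits) blast
    then show ?thesis using "3.IH"(3)[of w'] uv by (auto simp: h1_word_def last_append)
  qed
qed

lemma in_hy_hsZ: "ks \<noteq> [] \<or> ls \<noteq> [] \<Longrightarrow> in_hy (hsZ tau ks ls)"
  using keys_hsZ by (fastforce simp: in_hy_def h1_word_def)

lemma keys_sigW:
  "v \<in> Poly_Mapping.keys (sigW w :: _ \<Rightarrow>\<^sub>0 'k::comm_ring_1 poly) \<Longrightarrow>
    length v = length w \<and> (w \<noteq> [] \<longrightarrow> hd w = X \<longrightarrow> hd v = X)"
proof (induction w arbitrary: v rule: sigW.induct)
  case 1
  then show ?case using keys_wd[of "[]"] by auto
next
  case (2 w)
  then show ?case using keys_preW[of "[X]" "sigW w :: _ \<Rightarrow>\<^sub>0 'k poly"] by fastforce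
next
  case (3 w)
  let ?S = "sigW w :: _ \<Rightarrow>\<^sub>0 'k poly"
  have "v \<in> Poly_Mapping.keys (preW [Y] ?S) \<union> Poly_Mapping.keys (preW [X] ?S)"
    using "3.prems" keys_add[of "preW [Y] ?S" "smulW tvar (preW [X] ?S)"]
      keys_smulW[of tvar "preW [X] ?S"] by auto
  then show ?case using keys_preW[of "[Y]" ?S] keys_preW[of "[X]" ?S] "3.IH" by fastforce
qed

lemma keys_StW:
  assumes "v \<in> Poly_Mapping.keys (StW w :: _ \<Rightarrow>\<^sub>0 'k::comm_ring_1 poly)" "w \<noteq> []"
  shows "length v = length w \<and> last v = last w \<and> (hd w = X \<longrightarrow> hd v = X)"
proof -
  obtain v' where v: "v = v' @ [last w]" "v' \<in> Poly_Mapping.keys (sigW (butlast w) :: _ \<Rightarrow>\<^sub>0 'k poly)"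
    using assms keys_sufW[of "[last w]" "sigW (butlast w) :: _ \<Rightarrow>\<^sub>0 'k poly"]
    unfolding StW_def by auto
  have w: "w = butlast w @ [last w]" using assms(2) by simp
  have len: "length v' = length (butlast w)"
    and hd: "butlast w \<noteq> [] \<Longrightarrow> hd (butlast w) = X \<Longrightarrow> hd v' = X"
    using keys_sigW[OF v(2)] by auto
  have "hd v = X" if "hd w = X"
  proof (cases "butlast w = []")
    case True
    then show ?thesis using len v(1) w that by (metis append_Nil length_0_conv)
  next
    case False
    then show ?thesis using len v(1) w that hd by (metis hd_append length_0_conv)
  qed
  then show ?thesis using v(1) len assms(2) by simp
qed

lemma keys_St:
  assumes "v \<in> Poly_Mapping.keys (St p :: _ \<Rightarrow>\<^sub>0 'k::comm_ring_1 poly)"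
  obtains w where "w \<in> Poly_Mapping.keys p" "length v = length w"
    "w \<noteq> [] \<Longrightarrow> last v = last w" "w \<noteq> [] \<Longrightarrow> hd w = X \<Longrightarrow> hd v = X"
proof -
  obtain w where w: "w \<in> Poly_Mapping.keys p" "v \<in> Poly_Mapping.keys (StW w :: _ \<Rightarrow>\<^sub>0 'k poly)"
    using assms keys_lin[of StW p] unfolding St_def by blast
  show ?thesis
  proof (cases "w = []")
    case True
    then show ?thesis using that w keys_wd[of "[]"] by auto
  next
    case False
    then show ?thesis using that[OF w(1)] keys_StW[OF w(2)] by simp
  qed
qed

lemma in_h0_St: "in_h0 p \<Longrightarrow> in_h0 (St (p :: _ \<Rightarrow>\<^sub>0 'k::comm_ring_1 poly))"
  unfolding in_h0_def by (metis keys_St length_0_conv)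

lemma in_h1_St: "in_h1 p \<Longrightarrow> in_h1 (St (p :: _ \<Rightarrow>\<^sub>0 'k::comm_ring_1 poly))"
  unfolding in_h1_def h1_word_def by (metis keys_St length_0_conv)

lemma in_hy_St: "in_hy p \<Longrightarrow> in_hy (St (p :: _ \<Rightarrow>\<^sub>0 'k::comm_ring_1 poly))"
  unfolding in_hy_def by (metis keys_St length_0_conv)

lemma in_h1_StW_zsw: "in_h1 (StW (zsw ks) :: _ \<Rightarrow>\<^sub>0 'k::comm_ring_1 poly)"
proof -
  have "in_h1 (wd (zsw ks) :: _ \<Rightarrow>\<^sub>0 'k poly)"
    using keys_wd[of "zsw ks"] h1_word_zsw[of ks] by (auto simp: in_h1_def)
  then show ?thesis by (metis St_wd in_h1_St)
qed

lemma in_hy_StW_zsw: "ks \<noteq> [] \<Longrightarrow> in_hy (StW (zsw ks) :: _ \<Rightarrow>\<^sub>0 'k::comm_ring_1 poly)"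
proof -
  assume "ks \<noteq> []"
  then have "in_hy (wd (zsw ks) :: _ \<Rightarrow>\<^sub>0 'k poly)"
    using keys_wd[of "zsw ks"] h1_word_zsw[of ks] by (cases ks) (auto simp: in_hy_def h1_word_def)
  then show ?thesis by (metis St_wd in_hy_St)
qed

lemma StW_zw: "StW (zw k) = (wd (zw k) :: _ \<Rightarrow>\<^sub>0 'k::comm_ring_1 poly)"
proof -
  have "sigW (replicate n X) = (wd (replicate n X) :: _ \<Rightarrow>\<^sub>0 'k poly)" for n
    by (induction n) simp_all
  then show ?thesis by (simp add: StW_def zw_def)
qed

lemma St_xpre: "[] \<notin> Poly_Mapping.keys R \<Longrightarrow> St (xpre k R) = xpre k (St R)"
proof (induction k)
  case (Suc k)
  have "[] \<notin> Poly_Mapping.keys (xpre k R)" using keys_preW[of "replicate k X" R] Suc.prems by auto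
  then have "St (preW [X] (xpre k R)) = preW [X] (St (xpre k R))"
    using St_preW_letter[of "xpre k R" X] by simp
  then show ?case using Suc by (simp add: preW_preW)
qed simp

text \<open>The letter \<open>y\<close> of \<open>z\<^sub>k\<close> is not the last one, so \<open>S\<^sub>t\<close> turns it into \<open>y + t x\<close>.\<close>

lemma St_zpre:
  assumes k: "k \<ge> 1" and R: "[] \<notin> Poly_Mapping.keys R"
  shows "St (zpre k R) = zpre k (St R) + smulW tvar (xpre k (St R))"
proof -
  have "[] \<notin> Poly_Mapping.keys (preW [Y] R)" using keys_preW[of "[Y]" R] by auto
  moreover have "zpre k R = xpre (k - 1) (preW [Y] R)" by (simp add: preW_preW zw_def)
  ultimately have "St (zpre k R) = xpre (k - 1) (preW [Y] (St R) + smulW tvar (preW [X] (St R)))"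
    by (simp add: St_xpre St_preW_letter[OF R])
  then show ?thesis
    using k by (cases k) (simp_all add: preW_add preW_smulW preW_preW zw_def replicate_append_same)
qed

lemma StW_zsw_Cons:
  assumes "k \<ge> 1"
  shows "StW (zsw (k # u)) =
    zpre k (StW (zsw u)) + smulW (if u = [] then 0 else tvar) (xpre k (StW (zsw u) :: _ \<Rightarrow>\<^sub>0 'k::comm_ring_1 poly))"
proof (cases "u = []")
  case False
  then have "[] \<notin> Poly_Mapping.keys (wd (zsw u) :: _ \<Rightarrow>\<^sub>0 'k poly)"
    by (cases u) (auto simp: in_keys_iff lookup_wd)
  then show ?thesis using St_zpre[OF assms, of "wd (zsw u)"] False by simp
qed (simp add: StW_zw)

lemma Nil_notin_keys_if_in_hy: "in_hy R \<Longrightarrow> [] \<notin> Poly_Mapping.keys R"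
  by (auto simp: in_hy_def)

lemma St_hsZ_Cons_Cons:
  fixes u v :: "nat list"
  assumes "k \<ge> 1" "l \<ge> 1"
  defines "S1 \<equiv> St (hsZ tvar u (l # v)) :: _ \<Rightarrow>\<^sub>0 'k::comm_ring_1 poly" and "S2 \<equiv> St (hsZ tvar (k # u) v)" and "S3 \<equiv> St (hsZ tvar u v)"
  shows "St (hsZ tvar (k # u) (l # v)) =
    zpre k S1 + smulW tvar (xpre k S1) + zpre l S2 + smulW tvar (xpre l S2)
    + smulW (1 - 2 * tvar) (zpre (k + l) S3)
    - (if u = [] \<and> v = [] then 0 else smulW (tvar ^ 2) (xpre (k + l) S3))"
    (is "_ = ?rhs")
proof -
  have S12: "St (zpre k (hsZ tvar u (l # v))) = zpre k S1 + smulW tvar (xpre k S1)"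
    "St (zpre l (hsZ tvar (k # u) v)) = zpre l S2 + smulW tvar (xpre l S2)"
    unfolding S1_def S2_def using assms(1,2)
    by (simp_all add: St_zpre Nil_notin_keys_if_in_hy in_hy_hsZ)
  show ?thesis
  proof (cases "u = [] \<and> v = []")
    case True
    then show ?thesis using S12 assms(1,2)
      by (simp add: S3_def St_add St_smulW StW_zw)
  next
    case False
    then have "[] \<notin> Poly_Mapping.keys (hsZ tvar u v :: _ \<Rightarrow>\<^sub>0 'k poly)"
      by (simp add: Nil_notin_keys_if_in_hy in_hy_hsZ)
    then have S3: "St (zpre (k + l) (hsZ tvar u v)) = zpre (k + l) S3 + smulW tvar (xpre (k + l) S3)"
      "St (xpre (k + l) (hsZ tvar u v)) = xpre (k + l) S3"
      unfolding S3_def using assms(1) by (simp_all add: St_zpre St_xpre)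
    have "St (hsZ tvar (k # u) (l # v)) =
        St (zpre k (hsZ tvar u (l # v))) + St (zpre l (hsZ tvar (k # u) v))
        + smulW (1 - 2 * tvar) (St (zpre (k + l) (hsZ tvar u v)))
        + smulW (tvar ^ 2 - tvar) (St (xpre (k + l) (hsZ tvar u v)))"
      by (simp only: hsZ.simps if_not_P[OF False] St_add St_smulW)
    also have "\<dots> = ?rhs"
      unfolding S12 S3 if_not_P[OF False]
      by (simp add: preW_add preW_smulW smulW_add)
         (rule poly_mapping_eqI, simp add: lookup_add lookup_minus algebra_simps power2_eq_square)
    finally show ?thesis .
  qed
qed

lemma harmonic_zxpre_zxpre:
  fixes a b :: "'a::comm_ring_1" and A B :: "word \<Rightarrow>\<^sub>0 'a"
  assumes "k \<ge> 1" "l \<ge> 1" "a = 0 \<or> in_hy A" "b = 0 \<or> in_hy B"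
  defines "A' \<equiv> zpre k A + smulW a (xpre k A)" and "B' \<equiv> zpre l B + smulW b (xpre l B)"
  shows "harmonic A' B' =
    zpre k (harmonic A B') + smulW a (xpre k (harmonic A B'))
    + zpre l (harmonic A' B) + smulW b (xpre l (harmonic A' B))
    + smulW (1 - a - b) (zpre (k + l) (harmonic A B)) - smulW (a * b) (xpre (k + l) (harmonic A B))"
proof -
  have zx: "smulW b (harmonic (zpre k A) (xpre l B)) =
      smulW b (zpre k (harmonic A (xpre l B)) + xpre l (harmonic (zpre k A) B) - zpre (k + l) (harmonic A B))"
    using assms(4) by (cases "b = 0") (simp_all add: harmonic_zpre_xpre[OF _ assms(1)])
  have xz: "smulW a (harmonic (xpre k A) (zpre l B)) =
      smulW a (xpre k (harmonic A (zpre l B)) + zpre l (harmonic (xpre k A) B) - zpre (k + l) (harmonic A B))"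
    using assms(3) by (cases "a = 0") (simp_all add: harmonic_xpre_zpre[OF _ assms(2)])
  have xx: "smulW (a * b) (harmonic (xpre k A) (xpre l B)) =
      smulW (a * b) (xpre k (harmonic A (xpre l B)) + xpre l (harmonic (xpre k A) B) - xpre (k + l) (harmonic A B))"
    using assms(3,4) by (cases "a * b = 0") (auto simp: harmonic_xpre_xpre)
  show ?thesis
    unfolding A'_def B'_def
    by (simp add: harmonic_add1 harmonic_add2 harmonic_smulW1 harmonic_smulW2 harmonic_zpre_zpre[OF assms(1,2)]
        zx xz xx xx[unfolded mult.commute[of a b]] preW_add preW_smulW preW_diff smulW_add smulW_diff)
       (rule poly_mapping_eqI, simp add: lookup_add lookup_minus algebra_simps)
qed

text \<open>The harmonic product of \<open>S\<^sub>t\<close>-images of z-words obeys the recursion of the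
  \<open>t\<close>-harmonic product. When a factor is empty, the missing \<open>t\<close>-terms come from
  \<open>x\<^sup>k z\<^sub>l = z\<^sub>k\<^sub>+\<^sub>l\<close>.\<close>

lemma harmonic_StW_zsw_Cons_Cons:
  fixes u v :: "nat list"
  assumes k: "k \<ge> 1" and l: "l \<ge> 1"
  defines "A \<equiv> StW (zsw u) :: _ \<Rightarrow>\<^sub>0 'k::comm_ring_1 poly" and "B \<equiv> StW (zsw v) :: _ \<Rightarrow>\<^sub>0 'k poly"
    and "A' \<equiv> StW (zsw (k # u)) :: _ \<Rightarrow>\<^sub>0 'k poly" and "B' \<equiv> StW (zsw (l # v)) :: _ \<Rightarrow>\<^sub>0 'k poly"
  shows "harmonic A' B' =
    zpre k (harmonic A B') + smulW tvar (xpre k (harmonic A B'))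
    + zpre l (harmonic A' B) + smulW tvar (xpre l (harmonic A' B))
    + smulW (1 - 2 * tvar) (zpre (k + l) (harmonic A B))
    - (if u = [] \<and> v = [] then 0 else smulW (tvar ^ 2) (xpre (k + l) (harmonic A B)))"
    (is "_ = ?rhs")
proof -
  define a b where "a = (if u = [] then 0 else tvar :: 'k poly)" and "b = (if v = [] then 0 else tvar :: 'k poly)"
  have h1: "in_h1 A" "in_h1 B" "in_h1 A'" "in_h1 B'"
    unfolding A_def B_def A'_def B'_def by (rule in_h1_StW_zsw)+
  have A': "A' = zpre k A + smulW a (xpre k A)" and B': "B' = zpre l B + smulW b (xpre l B)"
    unfolding A'_def B'_def A_def B_def a_def b_def using StW_zsw_Cons k l by blast+
  have harmonic: "harmonic A' B' =
      zpre k (harmonic A B') + smulW a (xpre k (harmonic A B'))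
      + zpre l (harmonic A' B) + smulW b (xpre l (harmonic A' B))
      + smulW (1 - a - b) (zpre (k + l) (harmonic A B)) - smulW (a * b) (xpre (k + l) (harmonic A B))"
    unfolding A' B' by (rule harmonic_zxpre_zxpre[OF k l])
      (simp_all add: a_def b_def A_def B_def in_hy_StW_zsw)
  show ?thesis
  proof (cases "u = []"; cases "v = []")
    assume uv: "u \<noteq> []" "v \<noteq> []"
    then have "a = tvar" "b = tvar" by (simp_all add: a_def b_def)
    moreover have "1 - tvar - tvar = 1 - 2 * (tvar :: 'k poly)"
      by (metis diff_diff_eq mult_2)
    ultimately show ?thesis unfolding harmonic
      using uv by (simp only: power2_eq_square if_False simp_thms)
  next
    assume "u = []" "v \<noteq> []"
    then have "A = wd []" by (simp add: A_def)
    then have "harmonic A B' = B'" "harmonic A B = B" by (simp_all add: harmonic_Nil1 h1)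
    then show ?thesis unfolding harmonic
      using \<open>u = []\<close> \<open>v \<noteq> []\<close> unfolding B' a_def b_def
      by (simp add: preW_add preW_smulW smulW_add preW_preW replicate_X_zw[OF l] replicate_add[symmetric])
         (rule poly_mapping_eqI, simp add: lookup_add lookup_minus algebra_simps power2_eq_square)
  next
    assume "u \<noteq> []" "v = []"
    then have "B = wd []" by (simp add: B_def)
    then have "harmonic A' B = A'" "harmonic A B = A" by (simp_all add: harmonic_Nil2 h1)
    then show ?thesis unfolding harmonic
      using \<open>u \<noteq> []\<close> \<open>v = []\<close> unfolding A' a_def b_def
      by (simp add: preW_add preW_smulW smulW_add preW_preW replicate_X_zw[OF k] replicate_add[symmetric])
         (rule poly_mapping_eqI, simp add: lookup_add lookup_minus algebra_simps power2_eq_square)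
  next
    assume "u = []" "v = []"
    then have "A = wd []" "B = wd []" "a = 0" "b = 0" by (simp_all add: A_def B_def a_def b_def)
    moreover from this have "harmonic A B' = B'" "harmonic A' B = A'" "harmonic A B = wd []"
      using h1 by (simp_all add: harmonic_Nil1 harmonic_Nil2 hsW_def)
    ultimately show ?thesis unfolding harmonic unfolding A' B' using \<open>u = []\<close> \<open>v = []\<close>
      by (simp add: replicate_X_zw[OF k] replicate_X_zw[OF l] add.commute[of l k])
         (rule poly_mapping_eqI, simp add: lookup_add lookup_minus algebra_simps)
  qed
qed

lemma St_hsZ:
  assumes "\<forall>x\<in>set ks. x \<ge> 1" "\<forall>x\<in>set ls. x \<ge> 1"
  shows "St (hsZ tvar ks ls) = harmonic (StW (zsw ks)) (StW (zsw ls) :: _ \<Rightarrow>\<^sub>0 'k::comm_ring_1 poly)"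
  using assms
proof (induction "tvar :: 'k poly" ks ls rule: hsZ.induct)
  case (1 v)
  then show ?case by (simp add: harmonic_Nil1 in_h1_StW_zsw)
next
  case (2 k u)
  have "in_h1 (StW (zsw (k # u)) :: _ \<Rightarrow>\<^sub>0 'k poly)" by (rule in_h1_StW_zsw)
  then show ?case by (simp add: harmonic_Nil2)
next
  case (3 k u l v)
  have k: "k \<ge> 1" and l: "l \<ge> 1" using 3 by auto
  have "St (hsZ tvar u (l # v)) = harmonic (StW (zsw u)) (StW (zsw (l # v)) :: _ \<Rightarrow>\<^sub>0 'k poly)"
    "St (hsZ tvar (k # u) v) = harmonic (StW (zsw (k # u))) (StW (zsw v) :: _ \<Rightarrow>\<^sub>0 'k poly)"
    "St (hsZ tvar u v) = harmonic (StW (zsw u)) (StW (zsw v) :: _ \<Rightarrow>\<^sub>0 'k poly)"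
    using 3 by (simp_all del: zsw_Cons)
  then show ?case
    by (simp only: St_hsZ_Cons_Cons[OF k l] harmonic_StW_zsw_Cons_Cons[OF k l])
qed

lemma St_hsW: "h1_word u \<Longrightarrow> h1_word v \<Longrightarrow> St (hsW tvar u v) = harmonic (StW u) (StW v :: _ \<Rightarrow>\<^sub>0 'k::comm_ring_1 poly)"
  unfolding hsW_def using St_hsZ[of "zs u" "zs v", where 'k = 'k] zs_pos[of _ u] zs_pos[of _ v]
  by (simp add: zsw_zs)

lemma St_tharmonic:
  assumes "in_h1 P" "in_h1 Q"
  shows "St (tharmonic P Q) = harmonic (St P) (St (Q :: _ \<Rightarrow>\<^sub>0 'k::comm_ring_1 poly))"
  unfolding tharmonic_def
  by (rule bilin_eqI[where F = "\<lambda>P Q. St (bilin (hsW tvar) P Q)" and G = "\<lambda>P Q. harmonic (St P) (St Q)"])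
     (use assms in \<open>simp_all add: wlinear_comp[OF wlinear_St wlinear_bilin1] wlinear_comp[OF wlinear_St wlinear_bilin2]
       wlinear_comp[OF wlinear_harmonic1 wlinear_St] wlinear_comp[OF wlinear_harmonic2 wlinear_St] St_hsW in_h1_def\<close>)

section \<open>Coefficients in t\<close>

locale comm_ring_hom =
  fixes f :: "'a::comm_ring_1 \<Rightarrow> 'b::comm_ring_1"
  assumes hom_zero: "f 0 = 0" and hom_one: "f 1 = 1"
    and hom_add: "f (a + b) = f a + f b" and hom_mult: "f (a * b) = f a * f b"
begin

lemma hom_diff: "f (a - b) = f a - f b"
  using hom_add[of "a - b" b] by (simp add: eq_diff_eq)

lemma hom_power: "f (a ^ n) = f a ^ n"
  by (induction n) (simp_all add: hom_one hom_mult)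

lemma hom_numeral_2: "f 2 = 2"
  using hom_add[of 1 1] hom_one by simp

definition mapW :: "(word \<Rightarrow>\<^sub>0 'a) \<Rightarrow> (word \<Rightarrow>\<^sub>0 'b)" where
  "mapW p = Poly_Mapping.map f p"

lemma lookup_mapW [simp]: "Poly_Mapping.lookup (mapW p) w = f (Poly_Mapping.lookup p w)"
  by (simp add: mapW_def Poly_Mapping.map.rep_eq when_def hom_zero)

lemma keys_mapW: "Poly_Mapping.keys (mapW p) \<subseteq> Poly_Mapping.keys p"
  by (auto simp: in_keys_iff hom_zero)

lemma mapW_zero [simp]: "mapW 0 = 0"
  by (rule poly_mapping_eqI) (simp add: hom_zero)

lemma mapW_add: "mapW (p + q) = mapW p + mapW q"
  by (rule poly_mapping_eqI) (simp add: lookup_add hom_add)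

lemma mapW_diff: "mapW (p - q) = mapW p - mapW q"
  by (rule poly_mapping_eqI) (simp add: lookup_minus hom_diff)

lemma mapW_smulW: "mapW (smulW c p) = smulW (f c) (mapW p)"
  by (rule poly_mapping_eqI) (simp add: hom_mult)

lemma mapW_wd [simp]: "mapW (wd w) = wd w"
  by (rule poly_mapping_eqI) (simp add: lookup_wd hom_zero hom_one)

lemma mapW_single: "mapW (Poly_Mapping.single w c) = Poly_Mapping.single w (f c)"
  by (rule poly_mapping_eqI) (simp add: lookup_single when_def hom_zero)

lemma mapW_lin: "mapW (lin F p) = lin (\<lambda>u. mapW (F u)) (mapW p)"
proof -
  have "mapW (\<Sum>u\<in>I. g u) = (\<Sum>u\<in>I. mapW (g u))" for g and I :: "word set"
    by (induction I rule: infinite_finite_induct) (simp_all add: mapW_add)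
  then have "mapW (lin F p) = (\<Sum>u\<in>Poly_Mapping.keys p. smulW (Poly_Mapping.lookup (mapW p) u) (mapW (F u)))"
    by (simp add: lin_def mapW_smulW)
  also have "\<dots> = lin (\<lambda>u. mapW (F u)) (mapW p)"
    by (rule lin_superset[symmetric]) (simp_all add: keys_mapW)
  finally show ?thesis .
qed

lemma mapW_bilin: "mapW (bilin B p q) = bilin (\<lambda>u v. mapW (B u v)) (mapW p) (mapW q)"
  by (simp add: bilin_lin mapW_lin)

lemma mapW_preW: "mapW (preW u p) = preW u (mapW p)"
  by (simp add: preW_lin mapW_lin)

lemma mapW_shW: "mapW (shW tau u v) = shW (f tau) u v"
proof (induction tau u v rule: shW.induct)
  case (3 tau a w1 b w2)
  have "mapW (rhoW tau c w) = rhoW (f tau) c w" for c w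
    by (cases c) (simp_all add: rhoW_def mapW_single)
  then show ?case using 3 by (simp add: mapW_add mapW_diff mapW_preW)
qed simp_all

lemma mapW_hsZ: "mapW (hsZ tau u v) = hsZ (f tau) u v"
  by (induction tau u v rule: hsZ.induct)
     (simp_all add: mapW_add mapW_preW mapW_smulW hom_diff hom_mult hom_power hom_numeral_2 hom_one)

end

interpretation const_poly: comm_ring_hom "\<lambda>c::'a::comm_ring_1. [:c:]"
  by unfold_locales (simp_all add: one_pCons)

interpretation coeff_0: comm_ring_hom "\<lambda>c::'a::comm_ring_1 poly. coeff c 0"
  by unfold_locales (simp_all add: coeff_mult_0)

lemma lookup_coeffW [simp]: "Poly_Mapping.lookup (coeffW p n) w = coeff (Poly_Mapping.lookup p w) n"
  by (simp add: coeffW_def Poly_Mapping.map.rep_eq when_def)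

lemma keys_coeffW: "Poly_Mapping.keys (coeffW p n) \<subseteq> Poly_Mapping.keys p"
  by (auto simp: in_keys_iff)

lemma coeffW_0_eq: "coeffW p 0 = coeff_0.mapW p"
  by (rule poly_mapping_eqI) simp

lemma coeffW_const_poly: "coeffW (const_poly.mapW p) n = (if n = 0 then p else 0)"
  by (rule poly_mapping_eqI) (cases n, simp_all)

lemma coeffW_0_St: "coeffW (St p) 0 = coeffW (p :: _ \<Rightarrow>\<^sub>0 'k::comm_ring_1 poly) 0"
proof -
  have "coeff_0.mapW (sigW w) = (wd w :: _ \<Rightarrow>\<^sub>0 'k)" for w
    by (induction w rule: sigW.induct)
       (simp_all add: coeff_0.mapW_add coeff_0.mapW_preW coeff_0.mapW_smulW)
  then have "coeff_0.mapW (StW w) = (wd w :: _ \<Rightarrow>\<^sub>0 'k)" for w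
    by (simp add: StW_def sufW_lin coeff_0.mapW_lin)
  then show ?thesis
    by (simp add: coeffW_0_eq St_def coeff_0.mapW_lin lin_wd_self)
qed

lemma coeffW_0_tshuffle: "coeffW (tshuffle P Q) 0 = shuffle (coeffW P 0) (coeffW Q 0)"
  by (simp add: coeffW_0_eq tshuffle_def shuffle_def coeff_0.mapW_bilin coeff_0.mapW_shW)

lemma coeffW_0_tharmonic: "coeffW (tharmonic P Q) 0 = harmonic (coeffW P 0) (coeffW Q 0)"
  by (simp add: coeffW_0_eq tharmonic_def harmonic_def hsW_def[abs_def] coeff_0.mapW_bilin coeff_0.mapW_hsZ)

lemma bilin_superset:
  assumes "finite S" "Poly_Mapping.keys p \<subseteq> S" "finite T" "Poly_Mapping.keys q \<subseteq> T"
  shows "bilin B p q = (\<Sum>u\<in>S. \<Sum>v\<in>T. smulW (Poly_Mapping.lookup p u * Poly_Mapping.lookup q v) (B u v))"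
proof -
  have "bilin B p q = (\<Sum>u\<in>S. \<Sum>v\<in>Poly_Mapping.keys q. smulW (Poly_Mapping.lookup p u * Poly_Mapping.lookup q v) (B u v))"
    unfolding bilin_def using assms(1,2)
    by (intro sum.mono_neutral_cong_left) (auto simp: in_keys_iff)
  also have "\<dots> = (\<Sum>u\<in>S. \<Sum>v\<in>T. smulW (Poly_Mapping.lookup p u * Poly_Mapping.lookup q v) (B u v))"
    using assms(3,4) by (intro sum.cong refl sum.mono_neutral_cong_left) (auto simp: in_keys_iff)
  finally show ?thesis .
qed

lemma coeffW_bilin_const_poly:
  assumes B: "\<And>u v. B u v = const_poly.mapW (B0 u v)"
  shows "coeffW (bilin B P Q) n = (\<Sum>i\<le>n. bilin B0 (coeffW P i) (coeffW Q (n - i)))"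
proof (rule poly_mapping_eqI)
  fix w
  let ?S = "Poly_Mapping.keys P" and ?T = "Poly_Mapping.keys Q"
  let ?c = "\<lambda>u v i. coeff (Poly_Mapping.lookup P u) i * coeff (Poly_Mapping.lookup Q v) (n - i)
      * Poly_Mapping.lookup (B0 u v) w"
  have "Poly_Mapping.lookup (coeffW (bilin B P Q) n) w = (\<Sum>u\<in>?S. \<Sum>v\<in>?T.
      (\<Sum>i\<le>n. coeff (Poly_Mapping.lookup P u) i * coeff (Poly_Mapping.lookup Q v) (n - i))
      * Poly_Mapping.lookup (B0 u v) w)"
    by (simp add: bilin_superset[of ?S P ?T Q] B lookup_sum coeff_sum coeff_mult mult.commute)
  also have "\<dots> = (\<Sum>u\<in>?S. \<Sum>v\<in>?T. \<Sum>i\<le>n. ?c u v i)"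
    by (simp only: sum_distrib_right)
  also have "\<dots> = (\<Sum>i\<le>n. \<Sum>u\<in>?S. \<Sum>v\<in>?T. ?c u v i)"
    by (subst sum.swap) (rule sum.cong[OF refl], rule sum.swap)
  also have "\<dots> = Poly_Mapping.lookup (\<Sum>i\<le>n. bilin B0 (coeffW P i) (coeffW Q (n - i))) w"
    by (simp add: lookup_sum bilin_superset[OF _ keys_coeffW _ keys_coeffW])
  finally show "Poly_Mapping.lookup (coeffW (bilin B P Q) n) w =
      Poly_Mapping.lookup (\<Sum>i\<le>n. bilin B0 (coeffW P i) (coeffW Q (n - i))) w" .
qed

lemma coeffW_shuffle: "coeffW (shuffle P Q) n = (\<Sum>i\<le>n. shuffle (coeffW P i) (coeffW Q (n - i)))"
  unfolding shuffle_def
  by (rule coeffW_bilin_const_poly) (simp add: const_poly.mapW_shW)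

lemma coeffW_harmonic: "coeffW (harmonic P Q) n = (\<Sum>i\<le>n. harmonic (coeffW P i) (coeffW Q (n - i)))"
  unfolding harmonic_def
  by (rule coeffW_bilin_const_poly) (simp add: hsW_def const_poly.mapW_hsZ)

section \<open>Closure of h^0 under the products\<close>

lemma keys_bilin:
  "Poly_Mapping.keys (bilin B p q) \<subseteq>
    (\<Union>u\<in>Poly_Mapping.keys p. \<Union>v\<in>Poly_Mapping.keys q. Poly_Mapping.keys (B u v :: _ \<Rightarrow>\<^sub>0 'a::comm_semiring_1))"
proof -
  have "Poly_Mapping.keys (bilin B p q) \<subseteq> (\<Union>u\<in>Poly_Mapping.keys p. Poly_Mapping.keys (lin (B u) q))"
    unfolding bilin_lin by (rule keys_lin)
  also have "\<dots> \<subseteq> (\<Union>u\<in>Poly_Mapping.keys p. \<Union>v\<in>Poly_Mapping.keys q. Poly_Mapping.keys (B u v))"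
    using keys_lin[of "B _" q] by blast
  finally show ?thesis .
qed

lemma h1_word_if_in_keys_shW:
  "h1_word u \<Longrightarrow> h1_word v \<Longrightarrow> w \<in> Poly_Mapping.keys (shW tau u v) \<Longrightarrow> h1_word w"
proof (induction tau u v arbitrary: w rule: shW.induct)
  case (3 tau a w1 b w2)
  let ?A = "preW [a] (shW tau w1 (b # w2))" and ?B = "preW [b] (shW tau (a # w1) w2)"
  let ?C = "if w1 = [] then rhoW tau a (b # w2) else 0" and ?D = "if w2 = [] then rhoW tau b (a # w1) else 0"
  have h1: "h1_word w1" "h1_word w2" using "3.prems"(1,2) by (auto simp: h1_word_def split: if_splits)
  have "w \<in> Poly_Mapping.keys (?A + ?B - ?C - ?D)"
    using "3.prems"(3) by (simp only: shW.simps)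
  then have "w \<in> Poly_Mapping.keys ?A \<union> Poly_Mapping.keys ?B \<union> Poly_Mapping.keys ?C \<union> Poly_Mapping.keys ?D"
    using keys_add[of ?A ?B] keys_diff_subset[of "?A + ?B" ?C] keys_diff_subset[of "?A + ?B - ?C" ?D] by blast
  moreover have "Poly_Mapping.keys ?C \<subseteq> {X # b # w2}" "Poly_Mapping.keys ?D \<subseteq> {X # a # w1}"
    by (cases a; cases b; auto simp: rhoW_def)+
  ultimately consider "w \<in> Poly_Mapping.keys ?A" | "w \<in> Poly_Mapping.keys ?B" | "w = X # b # w2" | "w = X # a # w1"
    by blast
  then show ?case
  proof cases
    case 1
    then obtain w' where w': "w = a # w'" "w' \<in> Poly_Mapping.keys (shW tau w1 (b # w2))"
      using keys_preW by fastforce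
    then have "w' \<noteq> []" using Nil_notin_keys_shW by blast
    then show ?thesis using w' "3.IH"(1)[OF h1(1) "3.prems"(2) w'(2)] by (simp add: h1_word_def)
  next
    case 2
    then obtain w' where w': "w = b # w'" "w' \<in> Poly_Mapping.keys (shW tau (a # w1) w2)"
      using keys_preW by fastforce
    then have "w' \<noteq> []" using Nil_notin_keys_shW by blast
    then show ?thesis using w' "3.IH"(2)[OF "3.prems"(1) h1(2) w'(2)] by (simp add: h1_word_def)
  qed (use "3.prems" in \<open>simp_all add: h1_word_def\<close>)
qed (use keys_wd in fastforce)+

lemma h0_word_if_in_keys_shW:
  assumes "h0_word u" "h0_word v" "w \<in> Poly_Mapping.keys (shW (0::'a::comm_ring_1) u v)"
  shows "h0_word w"
proof (cases "u = [] \<or> v = []")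
  case True
  then have "shW (0::'a) u v = wd (if u = [] then v else u)" by auto
  with assms(3) have "w \<in> Poly_Mapping.keys (wd (if u = [] then v else u) :: _ \<Rightarrow>\<^sub>0 'a)" by simp
  then have "w = (if u = [] then v else u)" by (rule in_keys_wdD)
  then show ?thesis using assms True by (auto simp: h0_word_def)
next
  case False
  then obtain u' v' where uv: "u = X # u'" "v = X # v'"
    using assms(1,2) by (cases u; cases v) (auto simp: h0_word_def)
  have "h1_word w"
    using h1_word_if_in_keys_shW[OF _ _ assms(3)] assms(1,2) by (auto simp: h0_word_def h1_word_def)
  moreover have "w \<in> Poly_Mapping.keys (preW [X] (shW 0 u' (X # v')) + preW [X] (shW 0 (X # u') v') :: _ \<Rightarrow>\<^sub>0 'a)"
    using assms(3) uv by (simp cong: if_cong)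
  then have "hd w = X"
    using keys_add keys_preW[of "[X]" "shW (0::'a) u' (X # v')"] keys_preW[of "[X]" "shW (0::'a) (X # u') v'"]
    by fastforce
  ultimately show ?thesis by (auto simp: h0_word_def h1_word_def)
qed

lemma zs_h0_word:
  assumes "h0_word u" "u \<noteq> []"
  obtains m ms where "zs u = m # ms" "m \<ge> 2"
proof -
  have h1: "h1_word u" using assms by (auto simp: h0_word_def h1_word_def)
  then obtain m ms where zs: "zs u = m # ms" using assms(2) zsw_zs[OF h1] by (cases "zs u") auto
  have "m \<ge> 1" using zs zs_pos[of m u] by simp
  moreover have "u = zw m @ zsw ms" using zsw_zs[OF h1] zs by simp
  then have "m \<noteq> 1" using assms by (auto simp: h0_word_def zw_def)
  ultimately show ?thesis using that zs by simp
qed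

lemma h0_word_if_in_keys_hsW:
  assumes "h0_word u" "h0_word v" "w \<in> Poly_Mapping.keys (hsW (0::'a::comm_ring_1) u v)"
  shows "h0_word w"
proof (cases "u = [] \<or> v = []")
  case True
  have "h1_word u" "h1_word v" using assms by (auto simp: h0_word_def h1_word_def)
  then have "hsW (0::'a) u v = wd (if u = [] then v else u)" using True by (auto simp: hsW_def zsw_zs)
  with assms(3) have "w \<in> Poly_Mapping.keys (wd (if u = [] then v else u) :: _ \<Rightarrow>\<^sub>0 'a)" by simp
  then have "w = (if u = [] then v else u)" by (rule in_keys_wdD)
  then show ?thesis using assms True by (auto simp: h0_word_def)
next
  case False
  obtain m ms where m: "zs u = m # ms" "m \<ge> 2" using zs_h0_word assms(1) False by blast
  obtain n ns where n: "zs v = n # ns" "n \<ge> 2" using zs_h0_word assms(2) False by blast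
  have hd_zw: "hd (zw j @ w') = X" if "j \<ge> 2" for j w'
    using that by (cases j) (auto simp: zw_def)
  have "h1_word w" using keys_hsZ[of w "0::'a" "zs u" "zs v"] assms(3) by (simp add: hsW_def)
  moreover
  let ?A = "zpre m (hsZ (0::'a) ms (n # ns))" and ?B = "zpre n (hsZ (0::'a) (m # ms) ns)"
    and ?C = "zpre (m + n) (hsZ (0::'a) ms ns)"
  have "w \<in> Poly_Mapping.keys (?A + ?B + ?C)" using assms(3) by (simp add: hsW_def m n cong: if_cong)
  then have "w \<in> Poly_Mapping.keys ?A \<union> Poly_Mapping.keys ?B \<union> Poly_Mapping.keys ?C"
    using keys_add[of ?A ?B] keys_add[of "?A + ?B" ?C] by blast
  then have "hd w = X"
    using keys_preW[of "zw m" "hsZ (0::'a) ms (n # ns)"] keys_preW[of "zw n" "hsZ (0::'a) (m # ms) ns"]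
      keys_preW[of "zw (m + n)" "hsZ (0::'a) ms ns"] hd_zw[of m] hd_zw[of n] hd_zw[of "m + n"] m(2) n(2)
    by auto
  ultimately show ?thesis by (auto simp: h0_word_def h1_word_def)
qed

lemma in_h0_shuffle: "in_h0 p \<Longrightarrow> in_h0 q \<Longrightarrow> in_h0 (shuffle p (q :: _ \<Rightarrow>\<^sub>0 'a::comm_ring_1))"
  unfolding in_h0_iff shuffle_def using keys_bilin h0_word_if_in_keys_shW by blast

lemma in_h0_harmonic: "in_h0 p \<Longrightarrow> in_h0 q \<Longrightarrow> in_h0 (harmonic p (q :: _ \<Rightarrow>\<^sub>0 'a::comm_ring_1))"
  unfolding in_h0_iff harmonic_def using keys_bilin h0_word_if_in_keys_hsW by blast

lemma in_h0_coeffW: "in_h0 p \<Longrightarrow> in_h0 (coeffW p n)"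
  unfolding in_h0_def using keys_coeffW by blast

lemma in_h0_const_poly: "in_h0 p \<Longrightarrow> in_h0 (const_poly.mapW p)"
  unfolding in_h0_def using const_poly.keys_mapW by blast

lemma in_h0_sum: "(\<And>i. i \<in> I \<Longrightarrow> in_h0 (g i)) \<Longrightarrow> in_h0 (sum g I)"
  unfolding in_h0_def using keys_sum_subset[of g I] by blast

section \<open>The K[t]-linear extension of Z\<close>

lemma K_linear_on_h0_zero:
  assumes "K_linear_on_h0 phi Z"
  shows "Z 0 = 0"
proof -
  have "in_h0 0" by (simp add: in_h0_def)
  then have "Z (0 + 0) = Z 0 + Z 0" using assms unfolding K_linear_on_h0_def by blast
  then show ?thesis by simp
qed

lemma K_linear_on_h0_sum:
  assumes "K_linear_on_h0 phi Z" "\<And>i. i \<in> I \<Longrightarrow> in_h0 (g i)"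
  shows "Z (sum g I) = (\<Sum>i\<in>I. Z (g i))"
  using assms(2)
proof (induction I rule: infinite_finite_induct)
  case (insert x F)
  have "in_h0 (g x)" "in_h0 (sum g F)" using insert.prems by (auto intro: in_h0_sum)
  then have "Z (g x + sum g F) = Z (g x) + Z (sum g F)"
    using assms(1) by (simp add: K_linear_on_h0_def)
  then show ?case using insert by simp
qed (simp_all add: K_linear_on_h0_zero[OF assms(1)])

lemma coeff_Zext:
  assumes "Z 0 = 0"
  shows "coeff (Zext Z p) n = Z (coeffW p n)"
proof -
  let ?D = "\<Sum>w\<in>Poly_Mapping.keys p. Polynomial.degree (Poly_Mapping.lookup p w)"
  have "coeffW p n = 0" if "n > ?D"
  proof (rule poly_mapping_eqI)
    fix w
    have "Polynomial.degree (Poly_Mapping.lookup p w) \<le> ?D" if "w \<in> Poly_Mapping.keys p"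
      using that by (intro member_le_sum) auto
    then show "Poly_Mapping.lookup (coeffW p n) w = Poly_Mapping.lookup 0 w"
      using \<open>n > ?D\<close> by (cases "w \<in> Poly_Mapping.keys p") (auto simp: coeff_eq_0 in_keys_iff)
  qed
  then show ?thesis
    using assms by (auto simp: Zext_def coeff_sum)
qed

lemma coeff_0_Zt: "Z 0 = 0 \<Longrightarrow> coeff (Zt Z P) 0 = Z (coeffW P 0)"
  by (simp add: Zt_def coeff_Zext coeffW_0_St)

lemma Zext_mult:
  assumes lin: "K_linear_on_h0 phi Z" and "in_h0 A" "in_h0 B"
    and coeffs: "\<And>n. coeffW (mul_t A B) n = (\<Sum>i\<le>n. mul (coeffW A i) (coeffW B (n - i)))"
    and closed: "\<And>a b. in_h0 a \<Longrightarrow> in_h0 b \<Longrightarrow> in_h0 (mul a b)"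
    and mult: "\<And>a b. in_h0 a \<Longrightarrow> in_h0 b \<Longrightarrow> Z (mul a b) = Z a * Z b"
  shows "Zext Z (mul_t A B) = Zext Z A * Zext Z B"
proof (rule poly_eqI)
  fix n
  have Z0: "Z 0 = 0" by (rule K_linear_on_h0_zero[OF lin])
  have h0: "in_h0 (coeffW A i)" "in_h0 (coeffW B i)" for i
    using assms(2,3) by (simp_all add: in_h0_coeffW)
  have "coeff (Zext Z (mul_t A B)) n = Z (\<Sum>i\<le>n. mul (coeffW A i) (coeffW B (n - i)))"
    by (simp add: coeff_Zext[where Z = Z, OF Z0] coeffs)
  also have "\<dots> = (\<Sum>i\<le>n. Z (coeffW A i) * Z (coeffW B (n - i)))"
    by (simp add: K_linear_on_h0_sum[OF lin] closed mult h0)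
  also have "\<dots> = coeff (Zext Z A * Zext Z B) n"
    by (simp add: coeff_mult coeff_Zext[where Z = Z, OF Z0])
  finally show "coeff (Zext Z (mul_t A B)) n = coeff (Zext Z A * Zext Z B) n" .
qed

lemma Zt_tshuffle:
  assumes "K_linear_on_h0 phi Z" "double_shuffle Z" "in_h0 P" "in_h0 Q"
  shows "Zt Z (tshuffle P Q) = Zt Z P * Zt Z Q"
  unfolding Zt_def St_tshuffle
  using assms by (intro Zext_mult[where mul_t = shuffle and mul = shuffle] in_h0_St coeffW_shuffle in_h0_shuffle)
    (auto simp: double_shuffle_def)

lemma Zt_tharmonic:
  assumes "K_linear_on_h0 phi Z" "double_shuffle Z" "in_h0 P" "in_h0 Q"
  shows "Zt Z (tharmonic P Q) = Zt Z P * Zt Z Q"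
  unfolding Zt_def St_tharmonic[OF in_h1_if_in_h0[OF assms(3)] in_h1_if_in_h0[OF assms(4)]]
  using assms by (intro Zext_mult[where mul_t = harmonic and mul = harmonic] in_h0_St coeffW_harmonic in_h0_harmonic)
    (auto simp: double_shuffle_def)

theorem proposition2p2:
  fixes phi :: "'k::field_char_0 \<Rightarrow> 'r::comm_ring_1"
    and Z :: "(word \<Rightarrow>\<^sub>0 'k) \<Rightarrow> 'r"
  assumes "is_K_algebra_hom phi"
    and "K_linear_on_h0 phi Z"
  shows "double_shuffle Z \<longleftrightarrow>
    (\<forall>w1 w2 :: word \<Rightarrow>\<^sub>0 'k poly. in_h0 w1 \<longrightarrow> in_h0 w2 \<longrightarrow>
       Zt Z (tshuffle w1 w2) = Zt Z w1 * Zt Z w2 \<and>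
       Zt Z w1 * Zt Z w2 = Zt Z (tharmonic w1 w2))"
proof
  assume "double_shuffle Z"
  then show "\<forall>w1 w2 :: word \<Rightarrow>\<^sub>0 'k poly. in_h0 w1 \<longrightarrow> in_h0 w2 \<longrightarrow>
      Zt Z (tshuffle w1 w2) = Zt Z w1 * Zt Z w2 \<and> Zt Z w1 * Zt Z w2 = Zt Z (tharmonic w1 w2)"
    using Zt_tshuffle[OF assms(2)] Zt_tharmonic[OF assms(2)] by simp
next
  assume t_double_shuffle: "\<forall>w1 w2 :: word \<Rightarrow>\<^sub>0 'k poly. in_h0 w1 \<longrightarrow> in_h0 w2 \<longrightarrow>
      Zt Z (tshuffle w1 w2) = Zt Z w1 * Zt Z w2 \<and> Zt Z w1 * Zt Z w2 = Zt Z (tharmonic w1 w2)"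
  show "double_shuffle Z"
    unfolding double_shuffle_def
  proof (intro allI impI)
    fix a b :: "word \<Rightarrow>\<^sub>0 'k"
    assume "in_h0 a" "in_h0 b"
    then have "coeff (Zt Z (tshuffle P Q)) 0 = coeff (Zt Z P * Zt Z Q) 0"
      "coeff (Zt Z P * Zt Z Q) 0 = coeff (Zt Z (tharmonic P Q)) 0"
      if "P = const_poly.mapW a" "Q = const_poly.mapW b" for P Q
      using t_double_shuffle that in_h0_const_poly by metis+
    then show "Z (shuffle a b) = Z a * Z b \<and> Z a * Z b = Z (harmonic a b)"
      using K_linear_on_h0_zero[OF assms(2)]
      by (simp add: coeff_0_Zt coeff_mult_0 coeffW_0_tshuffle coeffW_0_tharmonic coeffW_const_poly)
  qed
qed

end
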